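(* Let $P$ be an isotropic Mueller transform field, and let $\mathrm P_{l_om_op_o,l_im_ip_i}$ be its PSH coefficients. Then: 1. $\mathrm P_{l_om_op_o,l_im_ip_i}=0$ whenever $|m_i|\ne|m_o|$. 2. For $l_i,l_o\ge2$, $\tilde{\mathrm P}_{l_om_o,l_im_i,\mathrm{iso}}=0$ whenever $m_i\ne m_o$. 3. For $l_i,l_o\ge2$, $\tilde{\mathrm P}_{l_om_o,l_im_i,\mathrm{conj}}=0$ whenever $m_i\ne -m_o$.
   Context: Fix a right-handed orthonormal global frame $F_g=[\hat x_g,\hat y_g,\hat z_g]$ of $\mathbb R^3$, spherical coordinates $\hat\omega(\theta,\phi)=\sin\theta\cos\phi\,\hat x_g+\sin\theta\sin\phi\,\hat y_g+\cos\theta\,\hat z_g$, and $d\hat\omega=\sin\theta\,d\theta\,d\phi$ on $S^2$. A local frame at $\hat\omega$ is a right-handed orthonormal frame $F$ with third axis $\hat\omega$; the others are $FR_z(\vartheta)$, i.e. $F$ rotated by $\vartheta$ about $\hat\omega$. The $\theta\phi$-frame field is $F_{\theta\phi}(\theta,\phi)=[\hat\theta,\hat\phi,\hat\omega]$ with $\hat\theta=\cos\theta\cos\phi\,\hat x_g+\cos\theta\sin\phi\,\hat y_g-\sin\theta\,\hat z_g$ and $\hat\phi=-\sin\phi\,\hat x_g+\cos\phi\,\hat y_g$. Stokes space. $\mathcal S_{\hat\omega}$ consists of classes $[\mathbf s]_F$ ($\mathbf s\in\mathbb R^4$) with $(\mathbf s,F)\sim(C(\vartheta)\mathbf s,FR_z(\vartheta))$,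 where $C(\vartheta)$ is the identity on coordinates 0, 3 and acts on coordinates $(1,2)$ by $\begin{pmatrix}\cos2\vartheta&\sin2\vartheta\\-\sin2\vartheta&\cos2\vartheta\end{pmatrix}$. The inner product is $\langle s,t\rangle=[s]^F\cdot[t]^F$, with $[s]^F$ the components. Rotations act by $R_{\mathcal S}[\mathbf s]_F=[\mathbf s]_{RF}$. Stokes vector fields $f$ ($f(\hat\omega)\in\mathcal S_{\hat\omega}$) have inner product $\langle f,g\rangle=\int_{S^2}\langle f(\hat\omega),g(\hat\omega)\rangle d\hat\omega$. Mueller transform fields. A Mueller transform $M:\mathcal S_{\hat\omega_i}\to\mathcal S_{\hat\omega_o}$ is a real linear map. Its Mueller matrix $[M]^{F_i\to F_o}\in\mathbb R^{4\times4}$ satisfies $[Ms]^{F_o}=[M]^{F_i\to F_o}[s]^{F_i}$. A Mueller transform field $P$ assigns to each $(\hat\omega_i,\hat\omega_o)$ a Mueller transform $P(\hat\omega_i,\hat\omega_o):\mathcal S_{\hat\omega_i}\to\mathcal S_{\hat\omega_o}$. It acts on Stokes vector fields by $P_{\mathcal F}[f](\hat\omega_o)=\int_{S^2}P(\hat\omega_i,\hat\omega_o)f(\hat\omega_i)d\hat\omega_i$. $P$ is called isotropic if $P(R\hat\omega_i,R\hat\omega_o)=R_{\mathcal S}P(\hat\omega_i,\hat\omega_o)R_{\mathcal S}^{-1}$ for every rotation $R$ about $\hat z_g$. Spherical harmonics. $Y_{lm}=\sqrt{\tfrac{2l+1}{4\pi}\tfrac{(l-m)!}{(l+m)!}}P_l^m(\cos\theta)e^{im\phi}$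 with Condon–Shortley associated Legendre functions. Real SH: $Y^R_{lm}=\sqrt2\,\mathrm{Re}\,Y_{lm}$ ($m>0$), $Y_{l0}$, $\sqrt2\,\mathrm{Im}\,Y_{l|m|}$ ($m<0$). Spin-2 SH ($l\ge2$): $${}_2Y_{lm}=\sqrt{\tfrac{(l-2)!}{(l+2)!}}[\alpha_{lm}Y_{lm}+\beta_{lm}Y_{l-1,m}],$$ with $\alpha_{lm}=\frac{2m^2-l(l+1)}{\sin^2\theta}-2m(l-1)\frac{\cot\theta}{\sin\theta}+l(l-1)\cot^2\theta$ and $\beta_{lm}=2\sqrt{\tfrac{2l+1}{2l-1}(l^2-m^2)}(\frac{m}{\sin^2\theta}+\frac{\cot\theta}{\sin\theta})$. PSH. $\vec Y_{lm0}=[(Y^R_{lm},0,0,0)^T]_{F_{\theta\phi}}$, $\vec Y_{lm1}=[(0,\mathrm{Re}\,{}_2Y_{lm},\mathrm{Im}\,{}_2Y_{lm},0)^T]_{F_{\theta\phi}}$, $\vec Y_{lm2}=[(0,-\mathrm{Im}\,{}_2Y_{lm},\mathrm{Re}\,{}_2Y_{lm},0)^T]_{F_{\theta\phi}}$, $\vec Y_{lm3}=[(0,0,0,Y^R_{lm})^T]_{F_{\theta\phi}}$. Indices: $|m|\le l$, and $l\ge 2$ when $p\in\{1,2\}$. Coefficients. The PSH coefficients of $P$ are $\mathrm P_{l_om_op_o,l_im_ip_i}=\langle\vec Y_{l_om_op_o},P_{\mathcal F}[\vec Y_{l_im_ip_i}]\rangle$. For a real $2\times2$ matrix $M=(m_{jk})$,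 set $$\mathbb C_{\mathrm{iso}}(M)=\tfrac{m_{11}+m_{22}}2+\tfrac{m_{21}-m_{12}}2 i,\qquad \mathbb C_{\mathrm{conj}}(M)=\tfrac{m_{11}-m_{22}}2+\tfrac{m_{21}+m_{12}}2 i.$$ Let $\tilde P_{\mathrm{iso}}(\hat\omega_i,\hat\omega_o)$ and $\tilde P_{\mathrm{conj}}(\hat\omega_i,\hat\omega_o)$ be $\mathbb C_{\mathrm{iso}}$ and $\mathbb C_{\mathrm{conj}}$ of the block with rows and columns $1,2$ (indices counted from 0) of $[P(\hat\omega_i,\hat\omega_o)]^{F_{\theta\phi}(\hat\omega_i)\to F_{\theta\phi}(\hat\omega_o)}$. Define $$\tilde{\mathrm P}_{l_om_o,l_im_i,\mathrm{iso}}=\iint\tilde P_{\mathrm{iso}}(\hat\omega_i,\hat\omega_o)\,\overline{{}_2Y_{l_om_o}(\hat\omega_o)}\,{}_2Y_{l_im_i}(\hat\omega_i)\,d\hat\omega_id\hat\omega_o,$$ $$\tilde{\mathrm P}_{l_om_o,l_im_i,\mathrm{conj}}=\iint\tilde P_{\mathrm{conj}}(\hat\omega_i,\hat\omega_o)\,\overline{{}_2Y_{l_om_o}(\hat\omega_o)}\,\overline{{}_2Y_{l_im_i}(\hat\omega_i)}\,d\hat\omega_id\hat\omega_o,$$ both integrals taken over $S^2\times S^2$. *)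

theory Defs
  imports "HOL-Analysis.Analysis" "HOL-Computational_Algebra.Polynomial"
begin

text \<open>Global frame: the standard basis of real^3; components x = \$1, y = \$2, z = \$3.\<close>

definition sph :: "real \<Rightarrow> real \<Rightarrow> real^3" where
  "sph \<theta> \<phi> = vector [sin \<theta> * cos \<phi>, sin \<theta> * sin \<phi>, cos \<theta>]"

text \<open>A frame is a triple of axis vectors (the columns of the frame matrix).\<close>
type_synonym frame = "(real^3) \<times> (real^3) \<times> (real^3)"

definition is_frame :: "frame \<Rightarrow> bool" where
  "is_frame F \<longleftrightarrow> (case F of (a, b, c) \<Rightarrow>
      norm a = 1 \<and> norm b = 1 \<and> norm c = 1 \<and> a \<bullet> b = 0 \<and> a \<bullet> c = 0 \<and> b \<bullet> c = 0
      \<and> cross3 a b = c)"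

definition local_frame :: "real^3 \<Rightarrow> frame \<Rightarrow> bool" where
  "local_frame \<omega> F \<longleftrightarrow> is_frame F \<and> snd (snd F) = \<omega>"

definition frot :: "frame \<Rightarrow> real \<Rightarrow> frame" where
  "frot F t = (case F of (a, b, c) \<Rightarrow>
      (cos t *\<^sub>R a + sin t *\<^sub>R b, (- sin t) *\<^sub>R a + cos t *\<^sub>R b, c))"

definition rotz :: "real \<Rightarrow> real^3 \<Rightarrow> real^3" where
  "rotz g v = vector [cos g * v$1 - sin g * v$2, sin g * v$1 + cos g * v$2, v$3]"

definition rotz_frame :: "real \<Rightarrow> frame \<Rightarrow> frame" where
  "rotz_frame g F = (case F of (a, b, c) \<Rightarrow> (rotz g a, rotz g b, rotz g c))"

definition Ftp :: "real \<Rightarrow> real \<Rightarrow> frame" where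
  "Ftp \<theta> \<phi> = (vector [cos \<theta> * cos \<phi>, cos \<theta> * sin \<phi>, - sin \<theta>],
                 vector [- sin \<phi>, cos \<phi>, 0],
                 sph \<theta> \<phi>)"

section \<open>Stokes components and Mueller matrices (indices 0..3 as in the paper)\<close>

definition stokes :: "real \<Rightarrow> real \<Rightarrow> real \<Rightarrow> real \<Rightarrow> real^4" where
  "stokes a b c d = (\<chi> i. if i = 0 then a else if i = 1 then b else if i = 2 then c else d)"

definition Cmat :: "real \<Rightarrow> real^4^4" where
  "Cmat t = (\<chi> i j.
      if (i = 0 \<and> j = 0) \<or> (i = 3 \<and> j = 3) then 1
      else if i = 1 \<and> j = 1 then cos (2 * t)
      else if i = 1 \<and> j = 2 then sin (2 * t)
      else if i = 2 \<and> j = 1 then - sin (2 * t)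
      else if i = 2 \<and> j = 2 then cos (2 * t)
      else 0)"

text \<open>
  A Mueller transform field P is represented by its Mueller matrices:
  P wi wo Fi Fo is the matrix of P(wi,wo) w.r.t. local frames Fi (at wi) and Fo (at wo).
  Such a family comes from a single real linear map
  S_wi to S_wo for every (wi,wo) iff it transforms correctly under change of local frames,
  since components in F R_z(t) are C(t) times components in F.\<close>
type_synonym mueller_field = "real^3 \<Rightarrow> real^3 \<Rightarrow> frame \<Rightarrow> frame \<Rightarrow> real^4^4"

definition is_mueller_field :: "mueller_field \<Rightarrow> bool" where
  "is_mueller_field P \<longleftrightarrow> (\<forall>wi wo Fi Fo a b. local_frame wi Fi \<and> local_frame wo Fo \<longrightarrow>
      P wi wo (frot Fi a) (frot Fo b) = Cmat b ** P wi wo Fi Fo ** Cmat (- a))"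

text \<open>Isotropy P(R wi, R wo) = R_S P(wi,wo) R_S^{-1} for all rotations R about z, written in
  matrices: the matrix of the right-hand side w.r.t. (R Fi, R Fo) is the matrix of P(wi,wo)
  w.r.t. (Fi, Fo).\<close>
definition isotropic :: "mueller_field \<Rightarrow> bool" where
  "isotropic P \<longleftrightarrow> (\<forall>g wi wo Fi Fo. local_frame wi Fi \<and> local_frame wo Fo \<longrightarrow>
      P (rotz g wi) (rotz g wo) (rotz_frame g Fi) (rotz_frame g Fo) = P wi wo Fi Fo)"

definition Ptp :: "mueller_field \<Rightarrow> real \<Rightarrow> real \<Rightarrow> real \<Rightarrow> real \<Rightarrow> real^4^4" where
  "Ptp P \<theta>i \<phi>i \<theta>o \<phi>o = P (sph \<theta>i \<phi>i) (sph \<theta>o \<phi>o) (Ftp \<theta>i \<phi>i) (Ftp \<theta>o \<phi>o)"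

definition S2dom :: "(real \<times> real) set" where
  "S2dom = {0..pi} \<times> {0..2*pi}"

definition sphere_int :: "(real \<Rightarrow> real \<Rightarrow> 'a::{banach, second_countable_topology}) \<Rightarrow> 'a" where
  "sphere_int f = set_lebesgue_integral lborel S2dom (\<lambda>x. sin (fst x) *\<^sub>R f (fst x) (snd x))"

definition sphere2_int ::
  "(real \<Rightarrow> real \<Rightarrow> real \<Rightarrow> real \<Rightarrow> 'a::{banach, second_countable_topology}) \<Rightarrow> 'a" where
  "sphere2_int f = set_lebesgue_integral lborel (S2dom \<times> S2dom)
     (\<lambda>x. (sin (fst (fst x)) * sin (fst (snd x))) *\<^sub>R
           f (fst (fst x)) (snd (fst x)) (fst (snd x)) (snd (snd x)))"

text \<open>Associated Legendre function with Condon-Shortley phase (Rodrigues form, valid for |m| \<le> l).\<close>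
definition alegendre :: "nat \<Rightarrow> int \<Rightarrow> real \<Rightarrow> real" where
  "alegendre l m x = (-1) ^ nat \<bar>m\<bar> / (2 ^ l * fact l) * (1 - x\<^sup>2) powr (of_int m / 2)
     * poly ((pderiv ^^ nat (int l + m)) ([:-1, 0, 1:] ^ l)) x"

definition ylm :: "nat \<Rightarrow> int \<Rightarrow> real \<Rightarrow> real \<Rightarrow> complex" where
  "ylm l m \<theta> \<phi> = complex_of_real
     (sqrt ((2 * real l + 1) / (4 * pi) * fact (nat (int l - m)) / fact (nat (int l + m)))
       * alegendre l m (cos \<theta>)) * cis (of_int m * \<phi>)"

definition yreal :: "nat \<Rightarrow> int \<Rightarrow> real \<Rightarrow> real \<Rightarrow> real" where
  "yreal l m \<theta> \<phi> = (if m > 0 then sqrt 2 * Re (ylm l m \<theta> \<phi>)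
                     else if m = 0 then Re (ylm l 0 \<theta> \<phi>)
                     else sqrt 2 * Im (ylm l \<bar>m\<bar> \<theta> \<phi>))"

definition alpha_s2 :: "nat \<Rightarrow> int \<Rightarrow> real \<Rightarrow> real" where
  "alpha_s2 l m \<theta> = (2 * (of_int m)\<^sup>2 - real l * (real l + 1)) / (sin \<theta>)\<^sup>2
     - 2 * of_int m * (real l - 1) * cot \<theta> / sin \<theta> + real l * (real l - 1) * (cot \<theta>)\<^sup>2"

definition beta_s2 :: "nat \<Rightarrow> int \<Rightarrow> real \<Rightarrow> real" where
  "beta_s2 l m \<theta> = 2 * sqrt ((2 * real l + 1) / (2 * real l - 1) * ((real l)\<^sup>2 - (of_int m)\<^sup>2))
     * (of_int m / (sin \<theta>)\<^sup>2 + cot \<theta> / sin \<theta>)"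

text \<open>Spin-2 spherical harmonics (l \<ge> 2).\<close>
definition y2lm :: "nat \<Rightarrow> int \<Rightarrow> real \<Rightarrow> real \<Rightarrow> complex" where
  "y2lm l m \<theta> \<phi> = complex_of_real (sqrt (fact (l - 2) / fact (l + 2)))
     * (complex_of_real (alpha_s2 l m \<theta>) * ylm l m \<theta> \<phi>
        + complex_of_real (beta_s2 l m \<theta>) * ylm (l - 1) m \<theta> \<phi>)"

text \<open>Polarized spherical harmonics: components in the theta-phi frame.\<close>
definition psh :: "nat \<Rightarrow> int \<Rightarrow> nat \<Rightarrow> real \<Rightarrow> real \<Rightarrow> real^4" where
  "psh l m p \<theta> \<phi> =
     (if p = 0 then stokes (yreal l m \<theta> \<phi>) 0 0 0
      else if p = 1 then stokes 0 (Re (y2lm l m \<theta> \<phi>)) (Im (y2lm l m \<theta> \<phi>)) 0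
      else if p = 2 then stokes 0 (- Im (y2lm l m \<theta> \<phi>)) (Re (y2lm l m \<theta> \<phi>)) 0
      else stokes 0 0 0 (yreal l m \<theta> \<phi>))"

definition psh_index :: "nat \<Rightarrow> int \<Rightarrow> nat \<Rightarrow> bool" where
  "psh_index l m p \<longleftrightarrow> p \<le> 3 \<and> \<bar>m\<bar> \<le> int l \<and> (p \<in> {1, 2} \<longrightarrow> l \<ge> 2)"

text \<open>PSH coefficient <Y_o, P_F[Y_i]>, with P_F[f](wo) computed in the theta-phi frame at wo.\<close>
definition psh_coeff :: "mueller_field \<Rightarrow> nat \<Rightarrow> int \<Rightarrow> nat \<Rightarrow> nat \<Rightarrow> int \<Rightarrow> nat \<Rightarrow> real" where
  "psh_coeff P lo mo po li mi pin = sphere_int (\<lambda>\<theta>o \<phi>o.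
      psh lo mo po \<theta>o \<phi>o \<bullet> sphere_int (\<lambda>\<theta>i \<phi>i. Ptp P \<theta>i \<phi>i \<theta>o \<phi>o *v psh li mi pin \<theta>i \<phi>i))"

definition C_iso :: "real^4^4 \<Rightarrow> complex" where
  "C_iso M = Complex ((M$1$1 + M$2$2) / 2) ((M$2$1 - M$1$2) / 2)"

definition C_conj :: "real^4^4 \<Rightarrow> complex" where
  "C_conj M = Complex ((M$1$1 - M$2$2) / 2) ((M$2$1 + M$1$2) / 2)"

definition tilde_iso :: "mueller_field \<Rightarrow> nat \<Rightarrow> int \<Rightarrow> nat \<Rightarrow> int \<Rightarrow> complex" where
  "tilde_iso P lo mo li mi = sphere2_int (\<lambda>\<theta>i \<phi>i \<theta>o \<phi>o.
      C_iso (Ptp P \<theta>i \<phi>i \<theta>o \<phi>o) * cnj (y2lm lo mo \<theta>o \<phi>o) * y2lm li mi \<theta>i \<phi>i)"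

definition tilde_conj :: "mueller_field \<Rightarrow> nat \<Rightarrow> int \<Rightarrow> nat \<Rightarrow> int \<Rightarrow> complex" where
  "tilde_conj P lo mo li mi = sphere2_int (\<lambda>\<theta>i \<phi>i \<theta>o \<phi>o.
      C_conj (Ptp P \<theta>i \<phi>i \<theta>o \<phi>o) * cnj (y2lm lo mo \<theta>o \<phi>o) * cnj (y2lm li mi \<theta>i \<phi>i))"

definition integrable_field :: "mueller_field \<Rightarrow> bool" where
  "integrable_field P \<longleftrightarrow> (\<forall>j k. set_integrable lborel (S2dom \<times> S2dom)
      (\<lambda>x. sin (fst (fst x)) * sin (fst (snd x)) *
            Ptp P (fst (fst x)) (snd (fst x)) (fst (snd x)) (snd (snd x)) $ j $ k))"

end

theory Submission
  imports Defs
begin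

(* A rotation about the z axis shifts both azimuths by the same angle and maps theta-phi frames to
   theta-phi frames, so an isotropic field is invariant under the simultaneous shift
   (phi_i, phi_o) -> (phi_i + g, phi_o + g), whereas Y_lm and its spin-2 analogue pick up the phase
   e^{i m g}. Shifting the integration variables of the tilde coefficients therefore multiplies them
   by e^{i (m_i - m_o) g} resp. e^{-i (m_i + m_o) g}; a shift whose phase is -1 shows that they vanish.

   For the PSH coefficients the harmonics of order m come in pairs (e, e') that rotate into each
   other with frequency +-m under an azimuthal shift. The 2x2 block of coefficients between two such
   pairs is then invariant under the rotations by m_o g and m_i g, so its trace part turns by
   (m_o - m_i) g and its trace-free part by (m_o + m_i) g; both vanish when |m_o| <> |m_i|.
   Writing the coefficient as one integral over S^2 x S^2 (Fubini) needs bounded harmonics. For the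
   spin-2 harmonics with |m| <= 1 this rests on the cancellation of the 1/sin^2 theta singularity at
   the poles, which follows from Rodrigues' formula. *)

section \<open>Rotations about the z axis are azimuthal shifts\<close>

lemma vec3_eq_iff: "(x::real^3) = y \<longleftrightarrow> x$1 = y$1 \<and> x$2 = y$2 \<and> x$3 = y$3"
  by (auto simp: vec_eq_iff forall_3)

lemma rotz_sph: "rotz g (sph \<theta> \<phi>) = sph \<theta> (\<phi> + g)"
  by (simp add: rotz_def sph_def vec3_eq_iff cos_add sin_add algebra_simps)

lemma rotz_frame_Ftp: "rotz_frame g (Ftp \<theta> \<phi>) = Ftp \<theta> (\<phi> + g)"
  by (simp add: rotz_frame_def rotz_def Ftp_def sph_def vec3_eq_iff cos_add sin_add algebra_simps)

lemma local_frame_Ftp: "local_frame (sph \<theta> \<phi>) (Ftp \<theta> \<phi>)"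
proof -
  have norm_eq_1: "norm (x::real^3) = 1 \<longleftrightarrow> x$1^2 + x$2^2 + x$3^2 = 1" for x
    by (simp add: norm_eq_sqrt_inner inner_vec_def sum_3 power2_eq_square)
  have inner_3: "(x::real^3) \<bullet> y = x$1*y$1 + x$2*y$2 + x$3*y$3" for x y
    by (simp add: inner_vec_def sum_3)
  have pythagoras: "cos \<phi> * (cos \<phi> * X) + sin \<phi> * (sin \<phi> * X) = X" for X
    by (metis distrib_right mult.assoc mult.left_neutral sin_cos_squared_add3)
  show ?thesis
    unfolding local_frame_def is_frame_def Ftp_def sph_def
    using pythagoras[of "cos \<theta> * sin \<theta>"] pythagoras[of "cos \<theta>"]
    by (simp add: norm_eq_1 inner_3 vec3_eq_iff cross3_simps power_mult_distrib algebra_simps cos_squared_eq)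
qed

lemma Ptp_periodic_in: "Ptp P \<theta>i (\<phi>i + 2*pi) \<theta>o \<phi>o = Ptp P \<theta>i \<phi>i \<theta>o \<phi>o"
  and Ptp_periodic_out: "Ptp P \<theta>i \<phi>i \<theta>o (\<phi>o + 2*pi) = Ptp P \<theta>i \<phi>i \<theta>o \<phi>o"
  by (simp_all add: Ptp_def Ftp_def sph_def)

lemma isotropic_Ptp_shift:
  assumes "isotropic P"
  shows "Ptp P \<theta>i (\<phi>i + g) \<theta>o (\<phi>o + g) = Ptp P \<theta>i \<phi>i \<theta>o \<phi>o"
  using assms local_frame_Ftp unfolding isotropic_def Ptp_def
  by (metis rotz_sph rotz_frame_Ftp)

section \<open>Integrals of periodic functions over a period box\<close>

lemma
  fixes f :: "'a::euclidean_space \<Rightarrow> 'b::{banach,second_countable_topology}"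
  shows integrable_lborel_translate_iff: "integrable lborel (\<lambda>x. f (x + c)) \<longleftrightarrow> integrable lborel f"
    and integral_lborel_translate: "(\<integral>x. f (x + c) \<partial>lborel) = integral\<^sup>L lborel f"
proof -
  have "(integrable lborel (\<lambda>x. f (x + c)) \<longleftrightarrow> integrable lborel f)
      \<and> (\<integral>x. f (x + c) \<partial>lborel) = integral\<^sup>L lborel f"
  proof (cases "f \<in> borel_measurable borel")
    case True
    have plus_c: "(+) c \<in> measurable lborel borel" by simp
    have "integrable lborel f \<longleftrightarrow> integrable (distr lborel borel ((+) c)) f"
      by (simp add: lborel_distr_plus)
    also have "\<dots> \<longleftrightarrow> integrable lborel (\<lambda>x. f (c + x))"
      by (rule integrable_distr_eq[OF plus_c True])
    moreover have "integral\<^sup>L lborel f = integral\<^sup>L (distr lborel borel ((+) c)) f"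
      by (simp add: lborel_distr_plus)
    moreover have "\<dots> = (\<integral>x. f (c + x) \<partial>lborel)"
      by (rule integral_distr[OF plus_c True])
    ultimately show ?thesis by (simp add: add.commute)
  next
    case False
    have "(\<lambda>x. f (x + c)) \<notin> borel_measurable borel"
    proof
      assume "(\<lambda>x. f (x + c)) \<in> borel_measurable borel"
      then have "(\<lambda>y. f (y - c + c)) \<in> borel_measurable borel"
        by (rule measurable_compose[rotated]) simp
      with False show False by simp
    qed
    then have "\<not> integrable lborel (\<lambda>x. f (x + c))" "\<not> integrable lborel f"
      using False borel_measurable_integrable[of lborel "\<lambda>x. f (x + c)"]
        borel_measurable_integrable[of lborel f] by auto
    then show ?thesis by (simp add: not_integrable_integral_eq)
  qed
  then show "integrable lborel (\<lambda>x. f (x + c)) \<longleftrightarrow> integrable lborel f"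
    and "(\<integral>x. f (x + c) \<partial>lborel) = integral\<^sup>L lborel f" by auto
qed

lemma set_integral_split_AE:
  fixes f :: "'a \<Rightarrow> 'b::{banach,second_countable_topology}"
  assumes sets: "A \<in> sets M" "B \<in> sets M" and sub: "A \<subseteq> D" "B \<subseteq> D"
    and decomp: "AE x in M. indicator D x = (indicator A x + indicator B x :: real)"
    and int: "set_integrable M D f"
  shows "set_integrable M A f" and "set_integrable M B f"
    and "(LINT x:D|M. f x) = (LINT x:A|M. f x) + (LINT x:B|M. f x)"
proof -
  show intA: "set_integrable M A f" and intB: "set_integrable M B f"
    using set_integrable_subset[OF int] sets sub by auto
  have "(LINT x:D|M. f x) = (\<integral>x. indicator A x *\<^sub>R f x + indicator B x *\<^sub>R f x \<partial>M)"
    unfolding set_lebesgue_integral_def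
  proof (rule integral_cong_AE)
    show "(\<lambda>x. indicator D x *\<^sub>R f x) \<in> borel_measurable M"
      using int by (auto simp: set_integrable_def)
    show "(\<lambda>x. indicator A x *\<^sub>R f x + indicator B x *\<^sub>R f x) \<in> borel_measurable M"
      using intA intB by (auto simp: set_integrable_def)
    show "AE x in M. indicator D x *\<^sub>R f x = indicator A x *\<^sub>R f x + indicator B x *\<^sub>R f x"
      using decomp by eventually_elim (simp add: scaleR_add_left[symmetric])
  qed
  also have "\<dots> = (LINT x:A|M. f x) + (LINT x:B|M. f x)"
    using intA intB by (simp add: set_integrable_def set_lebesgue_integral_def)
  finally show "(LINT x:D|M. f x) = (LINT x:A|M. f x) + (LINT x:B|M. f x)" .
qed

text \<open>The translate \<open>D + c\<close> is cut into \<open>A\<close> and \<open>B + p\<close>, where \<open>D = A \<union> B\<close> up to a null set.\<close>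

lemma set_integral_periodic_translate:
  fixes F :: "'a::euclidean_space \<Rightarrow> 'b::{banach,second_countable_topology}"
  assumes periodic: "\<And>x. F (x + p) = F x"
    and borel: "A \<in> sets borel" "B \<in> sets borel" and sub: "A \<subseteq> D" "B \<subseteq> D"
    and translate: "\<And>y. y - c \<in> D \<longleftrightarrow> y \<in> A \<or> y - p \<in> B"
    and disjoint: "\<And>y. y \<in> A \<Longrightarrow> y - p \<notin> B"
    and decomp: "AE y in lborel. indicator D y = (indicator A y + indicator B y :: real)"
    and int: "set_integrable lborel D F"
  shows "set_integrable lborel D (\<lambda>x. F (x + c))"
    and "(LINT x:D|lborel. F (x + c)) = (LINT x:D|lborel. F x)"
proof -
  note split = set_integral_split_AE[of A lborel B D, OF _ _ sub decomp int]
  define hA hB where "hA = (\<lambda>y. indicator A y *\<^sub>R F y)" and "hB = (\<lambda>y. indicator B y *\<^sub>R F y)"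
  have intA: "integrable lborel hA" and intB: "integrable lborel (\<lambda>y. hB (y - p))"
    using split(1,2) borel integrable_lborel_translate_iff[of hB "- p"]
    by (simp_all add: hA_def hB_def set_integrable_def)
  have shifted: "indicator D x *\<^sub>R F (x + c) = hA (x + c) + hB (x + c - p)" for x
    using translate[of "x + c"] disjoint[of "x + c"] periodic[of "x + c - p"]
    by (auto simp: hA_def hB_def indicator_def)
  have "(\<integral>y. hA y + hB (y - p) \<partial>lborel) = (\<integral>y. hA y \<partial>lborel) + (\<integral>y. hB (y - p) \<partial>lborel)"
    using intA intB by simp
  also have "\<dots> = (LINT x:D|lborel. F x)"
    using split(3) borel integral_lborel_translate[of hB "- p"]
    by (simp add: hA_def hB_def set_lebesgue_integral_def)
  finally show "(LINT x:D|lborel. F (x + c)) = (LINT x:D|lborel. F x)"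
    unfolding set_lebesgue_integral_def shifted
    using integral_lborel_translate[of "\<lambda>y. hA y + hB (y - p)" c] by simp
  show "set_integrable lborel D (\<lambda>x. F (x + c))"
    unfolding set_integrable_def shifted
    using intA intB integrable_lborel_translate_iff[of "\<lambda>y. hA y + hB (y - p)" c] by simp
qed

lemma negligible_hyperplane_in_lborel:
  assumes "k \<in> Basis"
  shows "{x::'a::euclidean_space. x \<bullet> k = a} \<in> null_sets lborel"
  using negligible_standard_hyperplane[OF assms, of a]
  by (simp add: negligible_iff_null_sets null_sets_completion_iff)

lemma set_integral_cbox_periodic_shift_integrable:
  fixes F :: "'a::euclidean_space \<Rightarrow> 'b::{banach,second_countable_topology}"
  assumes e: "e \<in> Basis"
    and periodic: "\<And>x. F (x + (b \<bullet> e - a \<bullet> e) *\<^sub>R e) = F x"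
    and t: "0 \<le> t" "t \<le> b \<bullet> e - a \<bullet> e"
    and int: "set_integrable lborel (cbox a b) F"
  shows "set_integrable lborel (cbox a b) (\<lambda>x. F (x + t *\<^sub>R e))"
    and "(LINT x:cbox a b|lborel. F (x + t *\<^sub>R e)) = (LINT x:cbox a b|lborel. F x)"
proof -
  define A where "A = cbox a b \<inter> {x. a \<bullet> e + t \<le> x \<bullet> e}"
  define B where "B = cbox a b \<inter> {x. a \<bullet> e < x \<bullet> e \<and> x \<bullet> e \<le> a \<bullet> e + t}"
  have coord: "(y - s *\<^sub>R e) \<bullet> i = (if i = e then y \<bullet> i - s else y \<bullet> i)" if "i \<in> Basis" for y s i
    using that e by (simp add: inner_diff_left inner_Basis)
  have mem_shift: "y - s *\<^sub>R e \<in> cbox a b \<longleftrightarrow>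
      (\<forall>i\<in>Basis - {e}. a \<bullet> i \<le> y \<bullet> i \<and> y \<bullet> i \<le> b \<bullet> i) \<and> a \<bullet> e \<le> y \<bullet> e - s \<and> y \<bullet> e - s \<le> b \<bullet> e" for y s
    using e unfolding mem_box by (auto simp: coord)
  have mem: "y \<in> cbox a b \<longleftrightarrow>
      (\<forall>i\<in>Basis - {e}. a \<bullet> i \<le> y \<bullet> i \<and> y \<bullet> i \<le> b \<bullet> i) \<and> a \<bullet> e \<le> y \<bullet> e \<and> y \<bullet> e \<le> b \<bullet> e" for y
    using mem_shift[of y 0] by simp
  have translate: "y - t *\<^sub>R e \<in> cbox a b \<longleftrightarrow> y \<in> A \<or> y - (b \<bullet> e - a \<bullet> e) *\<^sub>R e \<in> B" for y
    unfolding A_def B_def Int_iff mem_Collect_eq mem_shift mem using t by (auto simp: coord e)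
  have disjoint: "y \<in> A \<Longrightarrow> y - (b \<bullet> e - a \<bullet> e) *\<^sub>R e \<notin> B" for y
    unfolding A_def B_def Int_iff mem_Collect_eq mem_shift mem using t by (auto simp: coord e)
  have borel: "A \<in> sets borel" "B \<in> sets borel"
    unfolding A_def B_def by measurable
  have decomp: "AE y in lborel. indicator (cbox a b) y = (indicator A y + indicator B y :: real)"
  proof (rule AE_I')
    show "{x. x \<bullet> e = a \<bullet> e} \<union> {x. x \<bullet> e = a \<bullet> e + t} \<in> null_sets lborel"
      using negligible_hyperplane_in_lborel[OF e] by auto
    show "{y \<in> space lborel. indicator (cbox a b) y \<noteq> (indicator A y + indicator B y :: real)}
        \<subseteq> {x. x \<bullet> e = a \<bullet> e} \<union> {x. x \<bullet> e = a \<bullet> e + t}"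
      unfolding A_def B_def using t mem by (auto simp: indicator_def)
  qed
  show "set_integrable lborel (cbox a b) (\<lambda>x. F (x + t *\<^sub>R e))"
    and "(LINT x:cbox a b|lborel. F (x + t *\<^sub>R e)) = (LINT x:cbox a b|lborel. F x)"
    using set_integral_periodic_translate[OF periodic borel _ _ translate disjoint decomp int]
    unfolding A_def B_def by auto
qed

lemma set_integral_cbox_periodic_shift:
  fixes F :: "'a::euclidean_space \<Rightarrow> 'b::{banach,second_countable_topology}"
  assumes e: "e \<in> Basis"
    and periodic: "\<And>x. F (x + (b \<bullet> e - a \<bullet> e) *\<^sub>R e) = F x"
    and t: "0 \<le> t" "t \<le> b \<bullet> e - a \<bullet> e"
  shows "(LINT x:cbox a b|lborel. F (x + t *\<^sub>R e)) = (LINT x:cbox a b|lborel. F x)"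
proof (cases "set_integrable lborel (cbox a b) F")
  case True
  then show ?thesis
    using set_integral_cbox_periodic_shift_integrable(2)[where F=F and a=a and b=b, OF e periodic t]
    by blast
next
  case False
  define p where "p = b \<bullet> e - a \<bullet> e"
  have "\<not> set_integrable lborel (cbox a b) (\<lambda>x. F (x + t *\<^sub>R e))"
  proof
    assume "set_integrable lborel (cbox a b) (\<lambda>x. F (x + t *\<^sub>R e))"
    moreover have "F (x + (p - t) *\<^sub>R e + t *\<^sub>R e) = F x" for x
      using periodic[of x] by (simp add: p_def algebra_simps)
    moreover have "F (x + p *\<^sub>R e + t *\<^sub>R e) = F (x + t *\<^sub>R e)" for x
      using periodic[of "x + t *\<^sub>R e"] by (simp add: p_def algebra_simps)
    ultimately have "set_integrable lborel (cbox a b) F"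
      using set_integral_cbox_periodic_shift_integrable(1)
        [where F="\<lambda>x. F (x + t *\<^sub>R e)" and a=a and b=b and t="p - t", OF e] t
      by (simp add: p_def algebra_simps)
    with False show False ..
  qed
  with False show ?thesis
    by (simp add: set_lebesgue_integral_def set_integrable_def not_integrable_integral_eq)
qed

lemma sphere2_int_azimuth_shift:
  fixes f :: "real \<Rightarrow> real \<Rightarrow> real \<Rightarrow> real \<Rightarrow> 'a::{banach,second_countable_topology}"
  assumes periodic_in: "\<And>\<theta>i \<phi>i \<theta>o \<phi>o. f \<theta>i (\<phi>i + 2*pi) \<theta>o \<phi>o = f \<theta>i \<phi>i \<theta>o \<phi>o"
    and periodic_out: "\<And>\<theta>i \<phi>i \<theta>o \<phi>o. f \<theta>i \<phi>i \<theta>o (\<phi>o + 2*pi) = f \<theta>i \<phi>i \<theta>o \<phi>o"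
    and g: "0 \<le> g" "g \<le> 2*pi"
  shows "sphere2_int (\<lambda>\<theta>i \<phi>i \<theta>o \<phi>o. f \<theta>i (\<phi>i + g) \<theta>o (\<phi>o + g)) = sphere2_int f"
proof -
  define F where "F x = (sin (fst (fst x)) * sin (fst (snd x))) *\<^sub>R
    f (fst (fst x)) (snd (fst x)) (fst (snd x)) (snd (snd x))" for x :: "(real \<times> real) \<times> real \<times> real"
  define a b :: "(real \<times> real) \<times> real \<times> real" where "a = ((0, 0), (0, 0))" and "b = ((pi, 2*pi), (pi, 2*pi))"
  define ei eo :: "(real \<times> real) \<times> real \<times> real" where "ei = ((0, 1), (0, 0))" and "eo = ((0, 0), (0, 1))"
  have basis: "ei \<in> Basis" "eo \<in> Basis"
    by (simp_all add: ei_def eo_def Basis_prod_def zero_prod_def)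
  have sphere2_int_cbox: "sphere2_int h = (LINT x:cbox a b|lborel. (sin (fst (fst x)) * sin (fst (snd x))) *\<^sub>R
      h (fst (fst x)) (snd (fst x)) (fst (snd x)) (snd (snd x)))" for h :: "real \<Rightarrow> real \<Rightarrow> real \<Rightarrow> real \<Rightarrow> 'a"
    by (simp add: sphere2_int_def S2dom_def a_def b_def cbox_Pair_eq)
  have "sphere2_int (\<lambda>\<theta>i \<phi>i \<theta>o \<phi>o. f \<theta>i (\<phi>i + g) \<theta>o (\<phi>o + g))
      = (LINT x:cbox a b|lborel. F (x + g *\<^sub>R ei + g *\<^sub>R eo))"
    unfolding sphere2_int_cbox by (simp add: F_def ei_def eo_def)
  also have "\<dots> = (LINT x:cbox a b|lborel. F (x + g *\<^sub>R eo))"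
    by (rule set_integral_cbox_periodic_shift[where F="\<lambda>x. F (x + g *\<^sub>R eo)", OF basis(1)])
      (use g in \<open>simp_all add: a_def b_def F_def ei_def eo_def periodic_in\<close>)
  also have "\<dots> = (LINT x:cbox a b|lborel. F x)"
    by (rule set_integral_cbox_periodic_shift[OF basis(2)])
      (use g in \<open>simp_all add: a_def b_def F_def eo_def periodic_out\<close>)
  also have "\<dots> = sphere2_int f"
    unfolding sphere2_int_cbox by (simp add: F_def)
  finally show ?thesis .
qed

lemma ylm_azimuth_shift: "ylm l m \<theta> (\<phi> + g) = cis (of_int m * g) * ylm l m \<theta> \<phi>"
  by (simp add: ylm_def distrib_left cis_mult[symmetric] algebra_simps)

lemma y2lm_azimuth_shift: "y2lm l m \<theta> (\<phi> + g) = cis (of_int m * g) * y2lm l m \<theta> \<phi>"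
  unfolding y2lm_def ylm_azimuth_shift by (simp add: algebra_simps)

lemma y2lm_periodic: "y2lm l m \<theta> (\<phi> + 2*pi) = y2lm l m \<theta> \<phi>"
  using cis_multiple_2pi[of "of_int m"] by (simp add: y2lm_azimuth_shift mult.commute)

lemma half_turn_angle:
  fixes k :: int
  assumes "k \<noteq> 0"
  obtains g where "0 \<le> g" "g \<le> 2*pi" "cis (of_int k * g) = -1"
proof
  have "(1::real) \<le> of_int \<bar>k\<bar>"
    using assms by linarith
  then show "0 \<le> pi / of_int \<bar>k\<bar>" "pi / of_int \<bar>k\<bar> \<le> 2*pi"
    by (auto simp: field_simps)
  have "of_int k * (pi / of_int \<bar>k\<bar>) = pi \<or> of_int k * (pi / of_int \<bar>k\<bar>) = - pi"
    using assms by (cases "k > 0") auto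
  then show "cis (of_int k * (pi / of_int \<bar>k\<bar>)) = -1"
    by (auto simp: cis.ctr complex_eq_iff)
qed

lemma sphere2_int_eq_0_if_phase:
  fixes f :: "real \<Rightarrow> real \<Rightarrow> real \<Rightarrow> real \<Rightarrow> complex"
  assumes phase: "\<And>g \<theta>i \<phi>i \<theta>o \<phi>o. f \<theta>i (\<phi>i + g) \<theta>o (\<phi>o + g) = cis (of_int k * g) * f \<theta>i \<phi>i \<theta>o \<phi>o"
    and periodic_in: "\<And>\<theta>i \<phi>i \<theta>o \<phi>o. f \<theta>i (\<phi>i + 2*pi) \<theta>o \<phi>o = f \<theta>i \<phi>i \<theta>o \<phi>o"
    and periodic_out: "\<And>\<theta>i \<phi>i \<theta>o \<phi>o. f \<theta>i \<phi>i \<theta>o (\<phi>o + 2*pi) = f \<theta>i \<phi>i \<theta>o \<phi>o"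
    and "k \<noteq> 0"
  shows "sphere2_int f = 0"
proof -
  obtain g where g: "0 \<le> g" "g \<le> 2*pi" and half_turn: "cis (of_int k * g) = -1"
    using half_turn_angle[OF \<open>k \<noteq> 0\<close>] by blast
  have "sphere2_int f = sphere2_int (\<lambda>\<theta>i \<phi>i \<theta>o \<phi>o. f \<theta>i (\<phi>i + g) \<theta>o (\<phi>o + g))"
    using sphere2_int_azimuth_shift[where f=f, OF periodic_in periodic_out g] by simp
  also have "\<dots> = - sphere2_int f"
    by (simp add: phase half_turn sphere2_int_def set_lebesgue_integral_def)
  finally show ?thesis by simp
qed

lemma tilde_iso_eq_0:
  assumes "isotropic P" and "mi \<noteq> mo"
  shows "tilde_iso P lo mo li mi = 0"
  unfolding tilde_iso_def
proof (rule sphere2_int_eq_0_if_phase[where k = "mi - mo"])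
  show "C_iso (Ptp P \<theta>i (\<phi>i + g) \<theta>o (\<phi>o + g)) * cnj (y2lm lo mo \<theta>o (\<phi>o + g)) * y2lm li mi \<theta>i (\<phi>i + g)
      = cis (of_int (mi - mo) * g) * (C_iso (Ptp P \<theta>i \<phi>i \<theta>o \<phi>o) * cnj (y2lm lo mo \<theta>o \<phi>o) * y2lm li mi \<theta>i \<phi>i)"
    for g \<theta>i \<phi>i \<theta>o \<phi>o
    by (simp add: isotropic_Ptp_shift[OF assms(1)] y2lm_azimuth_shift cis_cnj cis_mult algebra_simps)
qed (use assms(2) in \<open>simp_all add: Ptp_periodic_in Ptp_periodic_out y2lm_periodic\<close>)

lemma tilde_conj_eq_0:
  assumes "isotropic P" and "mi \<noteq> - mo"
  shows "tilde_conj P lo mo li mi = 0"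
  unfolding tilde_conj_def
proof (rule sphere2_int_eq_0_if_phase[where k = "- mi - mo"])
  show "C_conj (Ptp P \<theta>i (\<phi>i + g) \<theta>o (\<phi>o + g)) * cnj (y2lm lo mo \<theta>o (\<phi>o + g)) * cnj (y2lm li mi \<theta>i (\<phi>i + g))
      = cis (of_int (- mi - mo) * g) * (C_conj (Ptp P \<theta>i \<phi>i \<theta>o \<phi>o) * cnj (y2lm lo mo \<theta>o \<phi>o) * cnj (y2lm li mi \<theta>i \<phi>i))"
    for g \<theta>i \<phi>i \<theta>o \<phi>o
    by (simp add: isotropic_Ptp_shift[OF assms(1)] y2lm_azimuth_shift cis_cnj cis_mult algebra_simps)
qed (use assms(2) in \<open>simp_all add: Ptp_periodic_in Ptp_periodic_out y2lm_periodic\<close>)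

section \<open>The bilinear form of a Mueller field and Fubini\<close>

lemma borel_measurable_vec:
  fixes f :: "'a \<Rightarrow> real^'n"
  assumes "\<And>i. (\<lambda>x. f x $ i) \<in> borel_measurable M"
  shows "f \<in> borel_measurable M"
proof -
  have "f = (\<lambda>x. \<Sum>i\<in>UNIV. (f x $ i) *\<^sub>R axis i 1)"
    by (simp add: basis_expansion scalar_mult_eq_scaleR[symmetric])
  also have "\<dots> \<in> borel_measurable M"
    using assms by (intro borel_measurable_sum borel_measurable_scaleR) auto
  finally show ?thesis .
qed

lemma integrable_vec:
  fixes f :: "'a \<Rightarrow> real^'n"
  assumes "\<And>i. integrable M (\<lambda>x. f x $ i)"
  shows "integrable M f"
proof -
  have expansion: "f = (\<lambda>x. \<Sum>i\<in>UNIV. (f x $ i) *\<^sub>R axis i 1)"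
    by (simp add: basis_expansion scalar_mult_eq_scaleR[symmetric])
  show ?thesis
    by (subst expansion) (use assms in \<open>intro Bochner_Integration.integrable_sum integrable_scaleR_left\<close>)
qed

lemma integrable_bounded_scaleR:
  fixes f :: "'a \<Rightarrow> 'b::{banach,second_countable_topology}"
  assumes "integrable M f" "g \<in> borel_measurable M" "\<And>x. \<bar>g x\<bar> \<le> B"
  shows "integrable M (\<lambda>x. g x *\<^sub>R f x)"
proof (rule Bochner_Integration.integrable_bound[where f="\<lambda>x. B *\<^sub>R f x"])
  show "integrable M (\<lambda>x. B *\<^sub>R f x)" "(\<lambda>x. g x *\<^sub>R f x) \<in> borel_measurable M"
    using assms by auto
  show "AE x in M. norm (g x *\<^sub>R f x) \<le> norm (B *\<^sub>R f x)"
  proof (intro AE_I2)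
    fix x
    have "\<bar>g x\<bar> \<le> \<bar>B\<bar>"
      using assms(3)[of x] by linarith
    then show "norm (g x *\<^sub>R f x) \<le> norm (B *\<^sub>R f x)"
      by (simp add: mult_right_mono)
  qed
qed

lemma integrable_bounded_inner:
  fixes h :: "'a \<Rightarrow> 'b::euclidean_space"
  assumes "integrable M h" "u \<in> borel_measurable M" "\<And>x. norm (u x) \<le> B"
  shows "integrable M (\<lambda>x. u x \<bullet> h x)"
proof (rule Bochner_Integration.integrable_bound[where f="\<lambda>x. B * norm (h x)"])
  show "integrable M (\<lambda>x. B * norm (h x))" "(\<lambda>x. u x \<bullet> h x) \<in> borel_measurable M"
    using assms by auto
  show "AE x in M. norm (u x \<bullet> h x) \<le> norm (B * norm (h x))"
  proof (intro AE_I2)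
    fix x
    have "\<bar>u x \<bullet> h x\<bar> \<le> B * norm (h x)"
      using Cauchy_Schwarz_ineq2[of "u x" "h x"] assms(3)[of x] by (meson mult_right_mono norm_ge_zero order.trans)
    then show "norm (u x \<bullet> h x) \<le> norm (B * norm (h x))" by simp
  qed
qed

lemma integrable_matrix_vector_mult:
  fixes A :: "'a \<Rightarrow> real^'n^'m" and w :: "'a \<Rightarrow> real^'n"
  assumes "\<And>j k. integrable M (\<lambda>x. A x $ j $ k)" "w \<in> borel_measurable M" "\<And>x. norm (w x) \<le> B"
  shows "integrable M (\<lambda>x. A x *v w x)"
proof (rule integrable_vec)
  fix j
  have bound: "\<bar>w x $ k\<bar> \<le> B" for x k
    using component_le_norm_cart[of "w x" k] assms(3)[of x] by linarith
  have "integrable M (\<lambda>x. w x $ k *\<^sub>R A x $ j $ k)" for k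
    using assms(1,2) bound
    by (intro integrable_bounded_scaleR[where B=B]) (auto intro: measurable_compose[OF _ borel_measurable_nth])
  then show "integrable M (\<lambda>x. (A x *v w x) $ j)"
    by (simp add: matrix_vector_mult_def mult.commute)
qed

lemma (in pair_sigma_finite) integral_inner_integral:
  fixes h :: "'a \<times> 'b \<Rightarrow> 'c::euclidean_space"
  assumes h: "integrable (M1 \<Otimes>\<^sub>M M2) h" and u: "u \<in> borel_measurable M2" "\<And>y. norm (u y) \<le> B"
  shows "(\<integral>y. u y \<bullet> (\<integral>x. h (x, y) \<partial>M1) \<partial>M2) = (\<integral>z. u (snd z) \<bullet> h z \<partial>(M1 \<Otimes>\<^sub>M M2))"
proof -
  have h_meas[measurable]: "h \<in> borel_measurable (M1 \<Otimes>\<^sub>M M2)"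
    using h by auto
  have "integrable (M1 \<Otimes>\<^sub>M M2) (\<lambda>z. u (snd z) \<bullet> h z)"
    using u by (intro integrable_bounded_inner[OF h, where B=B]) auto
  then have int: "integrable (M1 \<Otimes>\<^sub>M M2) (case_prod (\<lambda>x y. u y \<bullet> h (x, y)))"
    by (simp add: case_prod_beta')
  have "(\<integral>y. u y \<bullet> (\<integral>x. h (x, y) \<partial>M1) \<partial>M2) = (\<integral>y. (\<integral>x. u y \<bullet> h (x, y) \<partial>M1) \<partial>M2)"
  proof (rule integral_cong_AE)
    show "(\<lambda>y. u y \<bullet> (\<integral>x. h (x, y) \<partial>M1)) \<in> borel_measurable M2"
      using u by measurable
    show "(\<lambda>y. \<integral>x. u y \<bullet> h (x, y) \<partial>M1) \<in> borel_measurable M2"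
      using integrable_snd[OF int] by auto
    show "AE y in M2. u y \<bullet> (\<integral>x. h (x, y) \<partial>M1) = (\<integral>x. u y \<bullet> h (x, y) \<partial>M1)"
      using AE_integrable_snd[of "\<lambda>x y. h (x, y)"] h by (auto elim!: AE_mp)
  qed
  also have "\<dots> = (\<integral>z. u (snd z) \<bullet> h z \<partial>(M1 \<Otimes>\<^sub>M M2))"
    using integral_snd[OF int] by (simp add: case_prod_beta')
  finally show ?thesis .
qed

definition bounded_measurable_field :: "(real \<Rightarrow> real \<Rightarrow> real^4) \<Rightarrow> bool" where
  "bounded_measurable_field u \<longleftrightarrow>
     (\<exists>B. \<forall>\<theta> \<phi>. norm (u \<theta> \<phi>) \<le> B) \<and> (\<lambda>x. u (fst x) (snd x)) \<in> borel_measurable borel"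

definition mueller_form :: "mueller_field \<Rightarrow> (real \<Rightarrow> real \<Rightarrow> real^4) \<Rightarrow> (real \<Rightarrow> real \<Rightarrow> real^4) \<Rightarrow> real" where
  "mueller_form P u v = sphere2_int (\<lambda>\<theta>i \<phi>i \<theta>o \<phi>o. u \<theta>o \<phi>o \<bullet> (Ptp P \<theta>i \<phi>i \<theta>o \<phi>o *v v \<theta>i \<phi>i))"

definition transfer_integrand ::
  "mueller_field \<Rightarrow> (real \<Rightarrow> real \<Rightarrow> real^4) \<Rightarrow> (real \<times> real) \<times> real \<times> real \<Rightarrow> real^4" where
  "transfer_integrand P v z = (indicator (S2dom \<times> S2dom) z * sin (fst (fst z)) * sin (fst (snd z))) *\<^sub>R
     (Ptp P (fst (fst z)) (snd (fst z)) (fst (snd z)) (snd (snd z)) *v v (fst (fst z)) (snd (fst z)))"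

lemma transfer_integrand_lincomb:
  "transfer_integrand P (\<lambda>\<theta> \<phi>. c *\<^sub>R v1 \<theta> \<phi> + d *\<^sub>R v2 \<theta> \<phi>) z
     = c *\<^sub>R transfer_integrand P v1 z + d *\<^sub>R transfer_integrand P v2 z"
  by (simp add: transfer_integrand_def matrix_vector_right_distrib scaleR_matrix_vector_assoc algebra_simps)

lemma integrable_transfer_integrand:
  assumes "integrable_field P" and "bounded_measurable_field v"
  shows "integrable lborel (transfer_integrand P v)"
proof -
  obtain B where B: "\<And>\<theta> \<phi>. norm (v \<theta> \<phi>) \<le> B" and v_meas: "(\<lambda>x. v (fst x) (snd x)) \<in> borel_measurable borel"
    using assms(2) by (auto simp: bounded_measurable_field_def)
  define A where "A z = (indicator (S2dom \<times> S2dom) z * sin (fst (fst z)) * sin (fst (snd z))) *\<^sub>R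
    Ptp P (fst (fst z)) (snd (fst z)) (fst (snd z)) (snd (snd z))" for z :: "(real \<times> real) \<times> real \<times> real"
  have "integrable lborel (\<lambda>z. A z $ j $ k)" for j k
    using assms(1) by (simp add: integrable_field_def set_integrable_def A_def mult.assoc)
  moreover have "fst \<in> borel_measurable (borel :: ((real \<times> real) \<times> real \<times> real) measure)"
    by (intro borel_measurable_continuous_onI continuous_intros)
  then have "(\<lambda>z::(real \<times> real) \<times> real \<times> real. v (fst (fst z)) (snd (fst z))) \<in> borel_measurable lborel"
    using measurable_compose[OF _ v_meas] by simp
  ultimately have "integrable lborel (\<lambda>z. A z *v v (fst (fst z)) (snd (fst z)))"
    using B by (intro integrable_matrix_vector_mult[where B=B])
  then show ?thesis
    unfolding transfer_integrand_def[abs_def] A_def by (simp add: scaleR_matrix_vector_assoc[symmetric])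
qed

lemma mueller_form_eq_integral:
  "mueller_form P u v = (\<integral>z. u (fst (snd z)) (snd (snd z)) \<bullet> transfer_integrand P v z \<partial>lborel)"
  unfolding mueller_form_def sphere2_int_def set_lebesgue_integral_def transfer_integrand_def
  by (simp add: mult.assoc)

lemma integrable_mueller_form_integrand:
  assumes "integrable_field P" and "bounded_measurable_field u" and "bounded_measurable_field v"
  shows "integrable lborel (\<lambda>z. u (fst (snd z)) (snd (snd z)) \<bullet> transfer_integrand P v z)"
proof -
  obtain B where B: "\<And>\<theta> \<phi>. norm (u \<theta> \<phi>) \<le> B" and u_meas: "(\<lambda>x. u (fst x) (snd x)) \<in> borel_measurable borel"
    using assms(2) by (auto simp: bounded_measurable_field_def)
  have "snd \<in> borel_measurable (borel :: ((real \<times> real) \<times> real \<times> real) measure)"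
    by (intro borel_measurable_continuous_onI continuous_intros)
  then have "(\<lambda>z::(real \<times> real) \<times> real \<times> real. u (fst (snd z)) (snd (snd z))) \<in> borel_measurable lborel"
    using measurable_compose[OF _ u_meas] by simp
  then show ?thesis
    using B by (intro integrable_bounded_inner[OF integrable_transfer_integrand[OF assms(1,3)]])
qed

lemma mueller_form_bilinear:
  assumes P: "integrable_field P"
    and u: "bounded_measurable_field u1" "bounded_measurable_field u2"
    and v: "bounded_measurable_field v1" "bounded_measurable_field v2"
  shows "mueller_form P (\<lambda>\<theta> \<phi>. a1 *\<^sub>R u1 \<theta> \<phi> + a2 *\<^sub>R u2 \<theta> \<phi>) (\<lambda>\<theta> \<phi>. b1 *\<^sub>R v1 \<theta> \<phi> + b2 *\<^sub>R v2 \<theta> \<phi>)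
    = a1 * b1 * mueller_form P u1 v1 + a1 * b2 * mueller_form P u1 v2
      + a2 * b1 * mueller_form P u2 v1 + a2 * b2 * mueller_form P u2 v2"
  using integrable_mueller_form_integrand[OF P u(1) v(1)] integrable_mueller_form_integrand[OF P u(1) v(2)]
    integrable_mueller_form_integrand[OF P u(2) v(1)] integrable_mueller_form_integrand[OF P u(2) v(2)]
  unfolding mueller_form_eq_integral transfer_integrand_lincomb
  by (simp add: inner_add_left inner_add_right algebra_simps)

lemma sphere_int_inner_eq_mueller_form:
  assumes P: "integrable_field P" and u: "bounded_measurable_field u" and v: "bounded_measurable_field v"
  shows "sphere_int (\<lambda>\<theta>o \<phi>o. u \<theta>o \<phi>o \<bullet> sphere_int (\<lambda>\<theta>i \<phi>i. Ptp P \<theta>i \<phi>i \<theta>o \<phi>o *v v \<theta>i \<phi>i))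
    = mueller_form P u v"
proof -
  obtain B where B: "\<And>\<theta> \<phi>. norm (u \<theta> \<phi>) \<le> B" and u_meas: "(\<lambda>x. u (fst x) (snd x)) \<in> borel_measurable borel"
    using u by (auto simp: bounded_measurable_field_def)
  have inner: "indicator S2dom y *\<^sub>R (sin (fst y) *\<^sub>R (u (fst y) (snd y)
        \<bullet> sphere_int (\<lambda>\<theta>i \<phi>i. Ptp P \<theta>i \<phi>i (fst y) (snd y) *v v \<theta>i \<phi>i)))
      = u (fst y) (snd y) \<bullet> (\<integral>x. transfer_integrand P v (x, y) \<partial>lborel)" for y
  proof -
    have eq: "(indicator S2dom y * sin (fst y)) *\<^sub>R sphere_int (\<lambda>\<theta>i \<phi>i. Ptp P \<theta>i \<phi>i (fst y) (snd y) *v v \<theta>i \<phi>i)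
        = (\<integral>x. transfer_integrand P v (x, y) \<partial>lborel)"
      unfolding sphere_int_def set_lebesgue_integral_def integral_scaleR_right[symmetric]
      by (simp add: transfer_integrand_def indicator_times algebra_simps)
    show ?thesis
      unfolding eq[symmetric] inner_scaleR_right by simp
  qed
  have "sphere_int (\<lambda>\<theta>o \<phi>o. u \<theta>o \<phi>o \<bullet> sphere_int (\<lambda>\<theta>i \<phi>i. Ptp P \<theta>i \<phi>i \<theta>o \<phi>o *v v \<theta>i \<phi>i))
      = (\<integral>y. u (fst y) (snd y) \<bullet> (\<integral>x. transfer_integrand P v (x, y) \<partial>lborel) \<partial>lborel)"
    unfolding sphere_int_def[of "\<lambda>\<theta>o \<phi>o. u \<theta>o \<phi>o \<bullet> sphere_int (\<lambda>\<theta>i \<phi>i. Ptp P \<theta>i \<phi>i \<theta>o \<phi>o *v v \<theta>i \<phi>i)"]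
      set_lebesgue_integral_def by (simp only: inner)
  also have "\<dots> = (\<integral>z. u (fst (snd z)) (snd (snd z)) \<bullet> transfer_integrand P v z \<partial>(lborel \<Otimes>\<^sub>M lborel))"
    using integrable_transfer_integrand[OF P v] u_meas B
    by (intro lborel_pair.integral_inner_integral) (auto simp: lborel_prod)
  also have "\<dots> = mueller_form P u v"
    by (simp add: lborel_prod mueller_form_eq_integral)
  finally show ?thesis .
qed

section \<open>Pairs of fields rotating under azimuthal shifts\<close>

definition azimuthal_pair :: "(real \<Rightarrow> real \<Rightarrow> real^4) \<Rightarrow> (real \<Rightarrow> real \<Rightarrow> real^4) \<Rightarrow> int \<Rightarrow> bool" where
  "azimuthal_pair e e' n \<longleftrightarrow> bounded_measurable_field e \<and> bounded_measurable_field e' \<and>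
     (\<forall>\<theta> \<phi> g. e \<theta> (\<phi> + g) = cos (of_int n * g) *\<^sub>R e \<theta> \<phi> + sin (of_int n * g) *\<^sub>R e' \<theta> \<phi>
        \<and> e' \<theta> (\<phi> + g) = (- sin (of_int n * g)) *\<^sub>R e \<theta> \<phi> + cos (of_int n * g) *\<^sub>R e' \<theta> \<phi>)"

lemma azimuthal_pair_periodic:
  assumes "azimuthal_pair e e' n"
  shows "e \<theta> (\<phi> + 2*pi) = e \<theta> \<phi>" and "e' \<theta> (\<phi> + 2*pi) = e' \<theta> \<phi>"
  using assms cos_int_2pin[of n] sin_int_2pin[of n] unfolding azimuthal_pair_def
  by (simp_all add: mult.commute)

lemma mueller_form_azimuth_shift:
  assumes "isotropic P"
    and "\<And>\<theta> \<phi>. u \<theta> (\<phi> + 2*pi) = u \<theta> \<phi>" and "\<And>\<theta> \<phi>. v \<theta> (\<phi> + 2*pi) = v \<theta> \<phi>"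
    and "0 \<le> g" "g \<le> 2*pi"
  shows "mueller_form P (\<lambda>\<theta> \<phi>. u \<theta> (\<phi> + g)) (\<lambda>\<theta> \<phi>. v \<theta> (\<phi> + g)) = mueller_form P u v"
proof -
  have "sphere2_int (\<lambda>\<theta>i \<phi>i \<theta>o \<phi>o. u \<theta>o (\<phi>o + g) \<bullet> (Ptp P \<theta>i (\<phi>i + g) \<theta>o (\<phi>o + g) *v v \<theta>i (\<phi>i + g)))
      = sphere2_int (\<lambda>\<theta>i \<phi>i \<theta>o \<phi>o. u \<theta>o \<phi>o \<bullet> (Ptp P \<theta>i \<phi>i \<theta>o \<phi>o *v v \<theta>i \<phi>i))"
    by (rule sphere2_int_azimuth_shift) (simp_all add: assms Ptp_periodic_in Ptp_periodic_out)
  then show ?thesis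
    by (simp add: mueller_form_def isotropic_Ptp_shift[OF assms(1)])
qed

text \<open>The block \<open>(J\<^sub>j\<^sub>k)\<close> is invariant under rotating the output pair by \<open>n\<^sub>o g\<close> and the input pair by
  \<open>n\<^sub>i g\<close>; its trace part turns by \<open>(n\<^sub>o - n\<^sub>i) g\<close>, its trace-free part by \<open>(n\<^sub>o + n\<^sub>i) g\<close>.\<close>

lemma mueller_form_rotation:
  assumes P: "integrable_field P" "isotropic P"
    and out: "azimuthal_pair eo eo' no" and inc: "azimuthal_pair ei ei' ni"
    and g: "0 \<le> g" "g \<le> 2*pi"
  defines "J11 \<equiv> mueller_form P eo ei" and "J12 \<equiv> mueller_form P eo ei'"
    and "J21 \<equiv> mueller_form P eo' ei" and "J22 \<equiv> mueller_form P eo' ei'"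
  shows "J11 + J22 = cos (of_int (no - ni) * g) * (J11 + J22) + sin (of_int (no - ni) * g) * (J21 - J12)"
    and "J11 - J22 = cos (of_int (no + ni) * g) * (J11 - J22) + sin (of_int (no + ni) * g) * (J12 + J21)"
proof -
  define cA sA cB sB where "cA = cos (of_int no * g)" and "sA = sin (of_int no * g)"
    and "cB = cos (of_int ni * g)" and "sB = sin (of_int ni * g)"
  have bmf: "bounded_measurable_field eo" "bounded_measurable_field eo'"
    "bounded_measurable_field ei" "bounded_measurable_field ei'"
    using out inc by (auto simp: azimuthal_pair_def)
  note shift = mueller_form_azimuth_shift[where u=eo and v=ei, OF P(2) azimuthal_pair_periodic(1)[OF out]
      azimuthal_pair_periodic(1)[OF inc] g]
    mueller_form_azimuth_shift[where u=eo' and v=ei', OF P(2) azimuthal_pair_periodic(2)[OF out]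
      azimuthal_pair_periodic(2)[OF inc] g]
  have "J11 = mueller_form P (\<lambda>\<theta> \<phi>. cA *\<^sub>R eo \<theta> \<phi> + sA *\<^sub>R eo' \<theta> \<phi>) (\<lambda>\<theta> \<phi>. cB *\<^sub>R ei \<theta> \<phi> + sB *\<^sub>R ei' \<theta> \<phi>)"
    using shift(1) out inc by (simp add: J11_def cA_def sA_def cB_def sB_def azimuthal_pair_def)
  also have "\<dots> = cA * cB * J11 + cA * sB * J12 + sA * cB * J21 + sA * sB * J22"
    unfolding J11_def J12_def J21_def J22_def by (rule mueller_form_bilinear[OF P(1) bmf])
  finally have E1: "J11 = cA * cB * J11 + cA * sB * J12 + sA * cB * J21 + sA * sB * J22" .
  have "J22 = mueller_form P (\<lambda>\<theta> \<phi>. (- sA) *\<^sub>R eo \<theta> \<phi> + cA *\<^sub>R eo' \<theta> \<phi>) (\<lambda>\<theta> \<phi>. (- sB) *\<^sub>R ei \<theta> \<phi> + cB *\<^sub>R ei' \<theta> \<phi>)"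
    using shift(2) out inc by (simp add: J22_def cA_def sA_def cB_def sB_def azimuthal_pair_def)
  also have "\<dots> = (- sA) * (- sB) * J11 + (- sA) * cB * J12 + cA * (- sB) * J21 + cA * cB * J22"
    unfolding J11_def J12_def J21_def J22_def by (rule mueller_form_bilinear[OF P(1) bmf])
  finally have E2: "J22 = sA * sB * J11 - sA * cB * J12 - cA * sB * J21 + cA * cB * J22"
    by simp
  have "cos (of_int (no - ni) * g) = cA * cB + sA * sB" "sin (of_int (no - ni) * g) = sA * cB - cA * sB"
    "cos (of_int (no + ni) * g) = cA * cB - sA * sB" "sin (of_int (no + ni) * g) = sA * cB + cA * sB"
    by (simp_all add: cA_def sA_def cB_def sB_def left_diff_distrib distrib_right cos_diff sin_diff cos_add sin_add)
  with E1 E2 show "J11 + J22 = cos (of_int (no - ni) * g) * (J11 + J22) + sin (of_int (no - ni) * g) * (J21 - J12)"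
    and "J11 - J22 = cos (of_int (no + ni) * g) * (J11 - J22) + sin (of_int (no + ni) * g) * (J12 + J21)"
    by algebra+
qed

lemma mueller_form_azimuthal_pairs_eq_0:
  assumes P: "integrable_field P" "isotropic P"
    and out: "azimuthal_pair eo eo' no" and inc: "azimuthal_pair ei ei' ni"
    and "\<bar>no\<bar> \<noteq> \<bar>ni\<bar>"
  shows "mueller_form P eo ei = 0"
proof -
  have vanish: "x = 0"
    if "\<And>g. 0 \<le> g \<Longrightarrow> g \<le> 2*pi \<Longrightarrow> x = cos (of_int k * g) * x + sin (of_int k * g) * y" and "k \<noteq> 0"
    for x y :: real and k :: int
  proof -
    obtain g where "0 \<le> g" "g \<le> 2*pi" and half_turn: "cis (of_int k * g) = -1"
      using half_turn_angle[OF \<open>k \<noteq> 0\<close>] by blast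
    moreover have "cos (of_int k * g) = -1" "sin (of_int k * g) = 0"
      using arg_cong[OF half_turn, of Re] arg_cong[OF half_turn, of Im] by simp_all
    ultimately have "x = - x"
      using that(1) by fastforce
    then show ?thesis by simp
  qed
  have "no - ni \<noteq> 0" "no + ni \<noteq> 0"
    using \<open>\<bar>no\<bar> \<noteq> \<bar>ni\<bar>\<close> by auto
  have "mueller_form P eo ei + mueller_form P eo' ei' = 0"
    by (rule vanish[OF mueller_form_rotation(1)[OF P out inc] \<open>no - ni \<noteq> 0\<close>])
  moreover have "mueller_form P eo ei - mueller_form P eo' ei' = 0"
    by (rule vanish[OF mueller_form_rotation(2)[OF P out inc] \<open>no + ni \<noteq> 0\<close>])
  ultimately show ?thesis by simp
qed

section \<open>Associated Legendre functions as polynomials\<close>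

abbreviation rodrigues_base :: "real poly" where
  "rodrigues_base \<equiv> [:-1, 0, 1:]"

lemma real_poly_eqI: "(\<And>x. poly p x = poly q x) \<Longrightarrow> p = (q :: real poly)"
  using poly_eq_poly_eq_iff by blast

lemma pderiv_rodrigues_base: "pderiv rodrigues_base = [:0, 2:]"
  by (simp add: pderiv_pCons)

text \<open>For \<open>j \<le> n\<close> the \<open>j\<close>-th derivative of \<open>(x\<^sup>2 - 1)\<^sup>n\<close> keeps the factor \<open>(x\<^sup>2 - 1)\<^bsup>n - j\<^esup>\<close>;
  the remaining cofactor satisfies the following recursion.\<close>

fun rodrigues_cofactor :: "nat \<Rightarrow> nat \<Rightarrow> real poly" where
  "rodrigues_cofactor n 0 = 1"
| "rodrigues_cofactor n (Suc j) = smult (2 * real (n - j)) ([:0, 1:] * rodrigues_cofactor n j)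
     + rodrigues_base * pderiv (rodrigues_cofactor n j)"

lemma higher_pderiv_rodrigues_power:
  "j \<le> n \<Longrightarrow> (pderiv ^^ j) (rodrigues_base ^ n) = rodrigues_base ^ (n - j) * rodrigues_cofactor n j"
proof (induction j)
  case (Suc j)
  then obtain a where a: "n - j = Suc a"
    by (metis Suc_diff_le Suc_le_D diff_Suc_Suc)
  then have a': "n - Suc j = a"
    by simp
  have "(pderiv ^^ Suc j) (rodrigues_base ^ n) = pderiv (rodrigues_base ^ Suc a * rodrigues_cofactor n j)"
    using Suc by (simp add: a)
  also have "\<dots> = rodrigues_base ^ Suc a * pderiv (rodrigues_cofactor n j)
      + rodrigues_cofactor n j * (smult (of_nat (Suc a)) (rodrigues_base ^ a) * [:0, 2:])"
    by (simp only: pderiv_mult pderiv_power_Suc pderiv_rodrigues_base)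
  also have "\<dots> = rodrigues_base ^ a * (smult (2 * real (Suc a)) ([:0, 1:] * rodrigues_cofactor n j)
      + rodrigues_base * pderiv (rodrigues_cofactor n j))"
    by (simp add: algebra_simps smult_add_right)
  also have "\<dots> = rodrigues_base ^ (n - Suc j) * rodrigues_cofactor n (Suc j)"
    by (simp add: a a')
  finally show ?case .
qed simp

lemma poly_rodrigues_cofactor_unit:
  assumes "x\<^sup>2 = 1"
  shows "j \<le> n \<Longrightarrow> poly (rodrigues_cofactor n j) x = (2 * x) ^ j * fact n / fact (n - j)"
proof (induction j)
  case (Suc j)
  then obtain a where a: "n - j = Suc a"
    by (metis Suc_diff_le Suc_le_D diff_Suc_Suc)
  then have "n - Suc j = a"
    by simp
  have "poly (rodrigues_cofactor n (Suc j)) x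
      = 2 * real (Suc a) * x * ((2 * x) ^ j * fact n / (real (Suc a) * fact a))"
    using Suc assms by (simp add: a algebra_simps power2_eq_square)
  also have "\<dots> = (2 * x) ^ Suc j * fact n / fact (n - Suc j)"
    by (simp add: \<open>n - Suc j = a\<close> del: of_nat_Suc)
  finally show ?case .
qed simp

definition rodrigues_poly :: "nat \<Rightarrow> nat \<Rightarrow> real poly" where
  "rodrigues_poly n k = (pderiv ^^ k) (rodrigues_base ^ n)"

lemma poly_rodrigues_poly_diag:
  "x\<^sup>2 = 1 \<Longrightarrow> poly (rodrigues_poly n n) x = (2 * x) ^ n * fact n"
  using higher_pderiv_rodrigues_power[of n n] poly_rodrigues_cofactor_unit[of x n n]
  by (simp add: rodrigues_poly_def)

text \<open>The differentiated Legendre equation.\<close>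

lemma rodrigues_poly_recurrence:
  "rodrigues_base * rodrigues_poly n (Suc k) + [:2 * (real k - real n):] * ([:0, 1:] * rodrigues_poly n k)
    - [:real k * (2 * real n - real k + 1):] * rodrigues_poly n (k - 1) = 0"
proof (induction k)
  case 0
  show ?case
  proof (cases n)
    case (Suc n')
    have "rodrigues_poly n 1 = smult (of_nat (Suc n')) (rodrigues_base ^ n') * [:0, 2:]"
      unfolding rodrigues_poly_def Suc
      by (simp only: One_nat_def funpow.simps o_apply id_apply pderiv_power_Suc pderiv_rodrigues_base)
    then have "rodrigues_base * rodrigues_poly n 1 = [:2 * real n:] * ([:0, 1:] * rodrigues_base ^ n)"
      by (intro real_poly_eqI) (simp add: Suc algebra_simps)
    then show ?thesis by (simp add: rodrigues_poly_def)
  qed (simp add: rodrigues_poly_def)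
next
  case (Suc k)
  let ?c = "2 * (real k - real n)" and ?d = "real k * (2 * real n - real k + 1)"
  have deriv: "pderiv (rodrigues_poly n k) = rodrigues_poly n (Suc k)" for k
    by (simp add: rodrigues_poly_def)
  have e0: "pderiv ([:?d:] * rodrigues_poly n (k - 1)) = [:?d:] * rodrigues_poly n k"
    by (cases k) (simp_all add: pderiv_mult pderiv_pCons deriv pderiv_smult)
  have e1: "pderiv (rodrigues_base * rodrigues_poly n (Suc k))
      = [:0, 2:] * rodrigues_poly n (Suc k) + rodrigues_base * rodrigues_poly n (Suc (Suc k))"
    by (simp only: pderiv_mult pderiv_rodrigues_base deriv) (intro real_poly_eqI, simp add: algebra_simps)
  have e2: "pderiv ([:?c:] * ([:0, 1:] * rodrigues_poly n k))
      = [:?c:] * (rodrigues_poly n k + [:0, 1:] * rodrigues_poly n (Suc k))"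
    by (simp only: pderiv_mult deriv) (intro real_poly_eqI, simp add: pderiv_pCons algebra_simps)
  have "0 = pderiv (rodrigues_base * rodrigues_poly n (Suc k) + [:?c:] * ([:0, 1:] * rodrigues_poly n k)
      - [:?d:] * rodrigues_poly n (k - 1))"
    using Suc.IH by simp
  also have "\<dots> = [:0, 2:] * rodrigues_poly n (Suc k) + rodrigues_base * rodrigues_poly n (Suc (Suc k))
      + [:?c:] * (rodrigues_poly n k + [:0, 1:] * rodrigues_poly n (Suc k)) - [:?d:] * rodrigues_poly n k"
    by (simp only: pderiv_diff pderiv_add e0 e1 e2)
  also have "\<dots> = rodrigues_base * rodrigues_poly n (Suc (Suc k))
      + [:2 * (real (Suc k) - real n):] * ([:0, 1:] * rodrigues_poly n (Suc k))
      - [:real (Suc k) * (2 * real n - real (Suc k) + 1):] * rodrigues_poly n (Suc k - 1)"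
    by (intro real_poly_eqI) (simp add: algebra_simps)
  finally show ?case by simp
qed

lemma poly_rodrigues_poly_Suc_diag_1:
  "poly (rodrigues_poly n (Suc n)) 1 = real n * (real n + 1) / 2 * poly (rodrigues_poly n n) 1"
  using arg_cong[OF rodrigues_poly_recurrence[of n "Suc n"], of "\<lambda>p. poly p 1"]
  by (simp add: algebra_simps)

text \<open>Rodrigues' formula with the factor \<open>(1 - x\<^sup>2)\<^bsup>|m|/2\<^esup>\<close> taken out; for \<open>m < 0\<close> the negative power
  \<open>(1 - x\<^sup>2)\<^bsup>m/2\<^esup>\<close> is absorbed by the factor \<open>(x\<^sup>2 - 1)\<^bsup>|m|\<^esup>\<close> of the derivative.\<close>

definition legendre_cofactor :: "nat \<Rightarrow> int \<Rightarrow> real poly" where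
  "legendre_cofactor n m = (if m \<ge> 0
     then smult ((-1) ^ nat m / (2 ^ n * fact n)) (rodrigues_poly n (nat (int n + m)))
     else smult (1 / (2 ^ n * fact n)) (rodrigues_cofactor n (nat (int n + m))))"

lemma alegendre_eq_legendre_cofactor:
  assumes "\<bar>m\<bar> \<le> int n" and x: "\<bar>x\<bar> < 1"
  shows "alegendre n m x = (1 - x\<^sup>2) powr (of_int \<bar>m\<bar> / 2) * poly (legendre_cofactor n m) x"
proof (cases "m \<ge> 0")
  case False
  define k where "k = nat (- m)"
  have m: "m = - int k" and k: "k \<le> n"
    using False assms(1) by (auto simp: k_def)
  have pos: "0 < 1 - x\<^sup>2"
    using x by (simp add: abs_square_less_1)
  have "poly ((pderiv ^^ (n - k)) (rodrigues_base ^ n)) x = (x\<^sup>2 - 1) ^ k * poly (rodrigues_cofactor n (n - k)) x"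
    using higher_pderiv_rodrigues_power[of "n - k" n] k by (simp add: power2_eq_square algebra_simps)
  moreover have "(1 - x\<^sup>2) powr (of_int m / 2) * (x\<^sup>2 - 1) ^ k = (-1) ^ k * (1 - x\<^sup>2) powr (of_int \<bar>m\<bar> / 2)"
  proof -
    have "(x\<^sup>2 - 1) ^ k = (-1) ^ k * (1 - x\<^sup>2) powr (real k)"
      using pos by (simp add: powr_realpow power_mult_distrib[symmetric])
    moreover have "(1 - x\<^sup>2) powr (of_int m / 2) * (1 - x\<^sup>2) powr (real k) = (1 - x\<^sup>2) powr (of_int \<bar>m\<bar> / 2)"
      using m by (simp add: powr_add[symmetric])
    ultimately show ?thesis by simp
  qed
  moreover have "nat (int n + m) = n - k" "nat \<bar>m\<bar> = k"
    using m k by auto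
  ultimately show ?thesis
    using False by (simp add: alegendre_def legendre_cofactor_def field_simps power_mult_distrib[symmetric])
qed (simp add: alegendre_def legendre_cofactor_def rodrigues_poly_def)

lemma poly_legendre_cofactor_0_unit:
  "x\<^sup>2 = 1 \<Longrightarrow> poly (legendre_cofactor n 0) x = x ^ n"
  by (simp add: legendre_cofactor_def poly_rodrigues_poly_diag power_mult_distrib)

lemma poly_legendre_cofactor_1_1: "poly (legendre_cofactor n 1) 1 = - (real n * (real n + 1) / 2)"
proof -
  have "nat (int n + 1) = Suc n" by simp
  then show ?thesis
    by (simp add: legendre_cofactor_def poly_rodrigues_poly_Suc_diag_1 poly_rodrigues_poly_diag)
qed

lemma poly_legendre_cofactor_neg1_neg1:
  assumes "1 \<le> n"
  shows "poly (legendre_cofactor n (-1)) (-1) = (-1) ^ (n - 1) / 2"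
proof -
  obtain k where n: "n = Suc k"
    using assms by (cases n) auto
  have "nat (int n + - 1) = k"
    using n by simp
  then have "poly (legendre_cofactor n (-1)) (-1) = (-2) ^ k * fact n / (2 ^ n * fact n)"
    using poly_rodrigues_cofactor_unit[of "-1" k n] n by (simp add: legendre_cofactor_def)
  also have "\<dots> = (-1) ^ (n - 1) / 2"
  proof -
    have "(-2::real) ^ k = (-1) ^ k * 2 ^ k"
      by (simp add: power_mult_distrib[symmetric])
    then show ?thesis
      using n by simp
  qed
  finally show ?thesis .
qed

section \<open>Boundedness and measurability of the harmonics\<close>

definition ylm_norm :: "nat \<Rightarrow> int \<Rightarrow> real" where
  "ylm_norm l m = sqrt ((2 * real l + 1) / (4 * pi) * fact (nat (int l - m)) / fact (nat (int l + m)))"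

definition beta_factor :: "nat \<Rightarrow> int \<Rightarrow> real" where
  "beta_factor l m = 2 * sqrt ((2 * real l + 1) / (2 * real l - 1) * ((real l)\<^sup>2 - (of_int m)\<^sup>2))"

definition alpha_numerator :: "nat \<Rightarrow> int \<Rightarrow> real poly" where
  "alpha_numerator l m =
     [: 2 * (of_int m)\<^sup>2 - real l * (real l + 1), - 2 * of_int m * (real l - 1), real l * (real l - 1) :]"

text \<open>Away from the poles, \<open>\<^sub>2Y\<^sub>l\<^sub>m\<close> is \<open>sin\<^bsup>|m|\<^esup>\<theta> / sin\<^sup>2\<theta>\<close> times this polynomial in \<open>cos \<theta>\<close>.\<close>

definition spin2_numerator :: "nat \<Rightarrow> int \<Rightarrow> real poly" where
  "spin2_numerator l m = smult (ylm_norm l m) (alpha_numerator l m * legendre_cofactor l m)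
     + smult (beta_factor l m * ylm_norm (l - 1) m) ([:of_int m, 1:] * legendre_cofactor (l - 1) m)"

lemma ylm_eq_ylm_norm: "ylm l m \<theta> \<phi> = complex_of_real (ylm_norm l m * alegendre l m (cos \<theta>)) * cis (of_int m * \<phi>)"
  by (simp add: ylm_def ylm_norm_def)

lemma y2lm_eq_radial:
  "y2lm l m \<theta> \<phi> = complex_of_real (sqrt (fact (l - 2) / fact (l + 2)) *
     (alpha_s2 l m \<theta> * (ylm_norm l m * alegendre l m (cos \<theta>))
      + beta_s2 l m \<theta> * (ylm_norm (l - 1) m * alegendre (l - 1) m (cos \<theta>)))) * cis (of_int m * \<phi>)"
  by (simp add: y2lm_def ylm_eq_ylm_norm algebra_simps)

lemma abs_cos_less_1:
  fixes \<theta> :: real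
  assumes "sin \<theta> \<noteq> 0"
  shows "\<bar>cos \<theta>\<bar> < 1"
proof -
  have "(sin \<theta>)\<^sup>2 > 0"
    using assms by simp
  then have "(cos \<theta>)\<^sup>2 < 1"
    using sin_cos_squared_add[of \<theta>] by linarith
  then show ?thesis
    by (simp add: abs_square_less_1)
qed

lemma alpha_s2_eq_alpha_numerator:
  "alpha_s2 l m \<theta> = poly (alpha_numerator l m) (cos \<theta>) / (1 - (cos \<theta>)\<^sup>2)"
proof (cases "sin \<theta> = 0")
  case False
  then show ?thesis
    unfolding alpha_s2_def cot_def alpha_numerator_def sin_squared_eq[symmetric]
    by (simp add: field_simps power2_eq_square)
qed (simp add: alpha_s2_def cot_def sin_squared_eq[symmetric])

lemma beta_s2_eq_beta_factor:
  "beta_s2 l m \<theta> = beta_factor l m * (of_int m + cos \<theta>) / (1 - (cos \<theta>)\<^sup>2)"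
proof (cases "sin \<theta> = 0")
  case False
  then show ?thesis
    unfolding beta_s2_def cot_def beta_factor_def sin_squared_eq[symmetric]
    by (simp add: field_simps power2_eq_square)
qed (simp add: beta_s2_def cot_def sin_squared_eq[symmetric])

lemma radial_eq_spin2_numerator:
  assumes l: "2 \<le> l" and m: "\<bar>m\<bar> \<le> int l" and x: "\<bar>x\<bar> < 1"
  shows "poly (alpha_numerator l m) x / (1 - x\<^sup>2) * (ylm_norm l m * alegendre l m x)
      + beta_factor l m * (of_int m + x) / (1 - x\<^sup>2) * (ylm_norm (l - 1) m * alegendre (l - 1) m x)
    = (1 - x\<^sup>2) powr (of_int \<bar>m\<bar> / 2) * poly (spin2_numerator l m) x / (1 - x\<^sup>2)"
proof -
  define S where "S = 1 - x\<^sup>2"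
  have "x\<^sup>2 < 1"
    using x by (simp add: abs_square_less_1)
  then have S: "S \<noteq> 0"
    by (simp add: S_def)
  have beta_legendre: "beta_factor l m * alegendre (l - 1) m x
      = beta_factor l m * (S powr (of_int \<bar>m\<bar> / 2) * poly (legendre_cofactor (l - 1) m) x)"
  proof (cases "\<bar>m\<bar> = int l")
    case True
    then have "(real l)\<^sup>2 - (of_int m)\<^sup>2 = 0"
      by (metis of_int_of_nat_eq power2_abs diff_self of_int_abs)
    then show ?thesis by (simp add: beta_factor_def)
  next
    case False
    then have "\<bar>m\<bar> \<le> int (l - 1)"
      using m l by simp
    then show ?thesis
      unfolding S_def by (simp add: alegendre_eq_legendre_cofactor[OF _ x])
  qed
  have "poly (alpha_numerator l m) x / S * (ylm_norm l m * alegendre l m x)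
      + beta_factor l m * (of_int m + x) / S * (ylm_norm (l - 1) m * alegendre (l - 1) m x)
    = poly (alpha_numerator l m) x / S * (ylm_norm l m * (S powr (of_int \<bar>m\<bar> / 2) * poly (legendre_cofactor l m) x))
      + (of_int m + x) / S * ylm_norm (l - 1) m * (beta_factor l m * alegendre (l - 1) m x)"
    unfolding alegendre_eq_legendre_cofactor[OF m x, folded S_def] by (simp add: field_simps)
  also have "\<dots> = S powr (of_int \<bar>m\<bar> / 2) * poly (spin2_numerator l m) x / S"
    unfolding beta_legendre spin2_numerator_def using S by (simp add: field_simps)
  finally show ?thesis
    unfolding S_def .
qed

lemma sqrt_mult_eq: "a * b = c\<^sup>2 * d \<Longrightarrow> 0 \<le> c \<Longrightarrow> sqrt a * sqrt b = c * sqrt d"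
  by (metis real_sqrt_mult real_sqrt_abs abs_of_nonneg)

lemma beta_factor_ylm_norm:
  assumes "\<bar>m\<bar> < int l"
  shows "beta_factor l m * ylm_norm (l - 1) m = 2 * (real l + of_int m) * ylm_norm l m"
proof -
  define a b where "a = nat (int l - 1 - m)" and "b = nat (int l - 1 + m)"
  have nats: "nat (int (l - 1) - m) = a" "nat (int (l - 1) + m) = b"
    "nat (int l - m) = Suc a" "nat (int l + m) = Suc b"
    using assms by (auto simp: a_def b_def)
  have reals: "real l - of_int m = real a + 1" "real l + of_int m = real b + 1" "real (l - 1) = real l - 1"
    using assms by (auto simp: a_def b_def of_nat_diff)
  have "(real l)\<^sup>2 - (of_int m)\<^sup>2 = (real l - of_int m) * (real l + of_int m)"
    by (simp add: power2_eq_square algebra_simps)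
  also have "\<dots> = (real a + 1) * (real b + 1)"
    by (simp only: reals)
  finally have diff_sq: "(real l)\<^sup>2 - (of_int m)\<^sup>2 = (real a + 1) * (real b + 1)" .
  have "2 * real l - 1 \<noteq> 0"
    using assms by linarith
  then have "(2 * real l + 1) / (2 * real l - 1) * ((real l)\<^sup>2 - (of_int m)\<^sup>2)
      * ((2 * real (l - 1) + 1) / (4 * pi) * fact a / fact b)
    = (2 * real l + 1) / (4 * pi) * ((real a + 1) * (real b + 1)) * fact a / fact b"
    unfolding diff_sq reals(3) by (simp add: field_simps)
  also have "\<dots> = (real l + of_int m)\<^sup>2 * ((2 * real l + 1) / (4 * pi) * fact (Suc a) / fact (Suc b))"
  proof -
    define q where "q = real b + 1"
    have "q \<noteq> 0" "(fact (Suc b) :: real) = q * fact b" "(fact (Suc a) :: real) = (real a + 1) * fact a"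
      by (simp_all add: q_def)
    then show ?thesis
      unfolding reals(2) q_def[symmetric] by (simp add: power2_eq_square field_simps)
  qed
  finally have "sqrt ((2 * real l + 1) / (2 * real l - 1) * ((real l)\<^sup>2 - (of_int m)\<^sup>2))
      * sqrt ((2 * real (l - 1) + 1) / (4 * pi) * fact a / fact b)
    = (real l + of_int m) * sqrt ((2 * real l + 1) / (4 * pi) * fact (Suc a) / fact (Suc b))"
    using assms by (intro sqrt_mult_eq) auto
  then show ?thesis
    unfolding beta_factor_def ylm_norm_def nats by (simp only: mult.assoc)
qed

lemma spin2_numerator_roots:
  assumes l: "2 \<le> l" and m: "\<bar>m\<bar> \<le> 1"
  shows "poly (spin2_numerator l m) 1 = 0" and "poly (spin2_numerator l m) (-1) = 0"
proof -
  obtain n where n: "l = Suc (Suc n)"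
    using l by (metis add_2_eq_Suc le_Suc_ex)
  have KN: "beta_factor l m * ylm_norm (l - 1) m = 2 * (real l + of_int m) * ylm_norm l m"
    using l m by (intro beta_factor_ylm_norm) auto
  have poly_Z: "poly (spin2_numerator l m) x = ylm_norm l m * (poly (alpha_numerator l m) x * poly (legendre_cofactor l m) x
      + 2 * (real l + of_int m) * ((of_int m + x) * poly (legendre_cofactor (l - 1) m) x))" for x
    unfolding spin2_numerator_def poly_add poly_smult KN by (simp add: algebra_simps)
  consider "m = 0" | "m = 1" | "m = -1"
    using m by linarith
  then have "poly (spin2_numerator l m) 1 = 0 \<and> poly (spin2_numerator l m) (-1) = 0"
  proof cases
    case 1
    have "poly (legendre_cofactor l 0) 1 = 1" "poly (legendre_cofactor (l - 1) 0) 1 = 1"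
      "poly (legendre_cofactor l 0) (-1) = (-1) ^ n" "poly (legendre_cofactor (l - 1) 0) (-1) = - ((-1) ^ n)"
      using poly_legendre_cofactor_0_unit[of 1] poly_legendre_cofactor_0_unit[of "-1"] by (simp_all add: n)
    then show ?thesis
      unfolding poly_Z unfolding \<open>m = 0\<close> by (simp add: alpha_numerator_def algebra_simps)
  next
    case 2
    have "real (l - 1) = real l - 1"
      using l by simp
    then show ?thesis
      unfolding poly_Z unfolding \<open>m = 1\<close> poly_legendre_cofactor_1_1
      by (simp add: alpha_numerator_def field_simps)
  next
    case 3
    have "poly (legendre_cofactor l (-1)) (-1) = - ((-1) ^ n) / 2"
      "poly (legendre_cofactor (l - 1) (-1)) (-1) = (-1) ^ n / 2"
      using poly_legendre_cofactor_neg1_neg1[of l] poly_legendre_cofactor_neg1_neg1[of "l - 1"] by (simp_all add: n)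
    then show ?thesis
      unfolding poly_Z unfolding \<open>m = -1\<close> by (simp add: alpha_numerator_def algebra_simps)
  qed
  then show "poly (spin2_numerator l m) 1 = 0" and "poly (spin2_numerator l m) (-1) = 0"
    by auto
qed

lemma borel_measurable_poly [measurable]: "poly p \<in> borel_measurable (borel :: real measure)"
  by (intro borel_measurable_continuous_onI continuous_intros)

lemma borel_measurable_alegendre [measurable]: "alegendre l m \<in> borel_measurable borel"
  unfolding alegendre_def[abs_def] by measurable

lemma borel_measurable_alpha_s2 [measurable]: "alpha_s2 l m \<in> borel_measurable borel"
  unfolding alpha_s2_def[abs_def] cot_def by measurable

lemma borel_measurable_beta_s2 [measurable]: "beta_s2 l m \<in> borel_measurable borel"
  unfolding beta_s2_def[abs_def] cot_def by measurable

lemma borel_measurable_ylm: "(\<lambda>x. ylm l m (fst x) (snd x)) \<in> borel_measurable borel"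
proof -
  have [measurable]: "(\<lambda>x::real \<times> real. cos (fst x)) \<in> borel_measurable borel"
    "(\<lambda>x::real \<times> real. cis (of_int m * snd x)) \<in> borel_measurable borel"
    by (intro borel_measurable_continuous_onI continuous_intros)+
  show ?thesis
    unfolding ylm_def by measurable
qed

lemma borel_measurable_y2lm: "(\<lambda>x. y2lm l m (fst x) (snd x)) \<in> borel_measurable borel"
proof -
  have [measurable]: "(\<lambda>x::real \<times> real. cos (fst x)) \<in> borel_measurable borel"
    "(\<lambda>x::real \<times> real. fst x) \<in> borel_measurable borel"
    "(\<lambda>x::real \<times> real. cis (of_int m * snd x)) \<in> borel_measurable borel"
    by (intro borel_measurable_continuous_onI continuous_intros)+
  show ?thesis
    unfolding y2lm_def ylm_def by measurable
qed

lemma borel_measurable_yreal: "(\<lambda>x. yreal l m (fst x) (snd x)) \<in> borel_measurable borel"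
  unfolding yreal_def using borel_measurable_ylm by measurable

lemma borel_measurable_stokes:
  "f1 \<in> borel_measurable M \<Longrightarrow> f2 \<in> borel_measurable M \<Longrightarrow> f3 \<in> borel_measurable M \<Longrightarrow> f4 \<in> borel_measurable M \<Longrightarrow>
   (\<lambda>x. stokes (f1 x) (f2 x) (f3 x) (f4 x)) \<in> borel_measurable M"
  by (rule borel_measurable_vec) (simp add: stokes_def)

lemma borel_measurable_psh: "(\<lambda>x. psh l m q (fst x) (snd x)) \<in> borel_measurable borel"
proof -
  note [measurable] = borel_measurable_yreal borel_measurable_y2lm
  show ?thesis
    unfolding psh_def
    by (cases "q = 0"; cases "q = 1"; cases "q = 2") (simp_all add: borel_measurable_stokes)
qed

lemma poly_bounded_on_unit_interval: "\<exists>B. \<forall>x::real. \<bar>x\<bar> \<le> 1 \<longrightarrow> \<bar>poly p x\<bar> \<le> B"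
proof -
  have "compact (poly p ` {-1..1::real})"
    by (rule compact_continuous_image) (auto intro: continuous_intros)
  then obtain B where B: "\<forall>y\<in>poly p ` {-1..1::real}. \<bar>y\<bar> \<le> B"
    by (meson bounded_real compact_imp_bounded)
  have "\<bar>poly p x\<bar> \<le> B" if "\<bar>x\<bar> \<le> 1" for x :: real
  proof -
    have "x \<in> {-1..1}"
      using that by auto
    then show ?thesis
      using B by blast
  qed
  then show ?thesis by blast
qed

lemma rodrigues_base_dvd:
  assumes "poly p 1 = 0" and "poly p (-1) = 0"
  shows "rodrigues_base dvd p"
proof -
  obtain q1 where q1: "p = [:-1, 1:] * q1"
    using assms(1) by (metis poly_eq_0_iff_dvd dvdE)
  then have "poly q1 (-1) = 0"
    using assms(2) by simp
  then obtain q where "q1 = [:1, 1:] * q"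
    by (metis poly_eq_0_iff_dvd dvdE minus_minus)
  with q1 have "p = rodrigues_base * q"
    by (simp add: algebra_simps)
  then show ?thesis ..
qed

lemma powr_poly_quotient_bounded_if_roots:
  assumes "poly p 1 = 0" and "poly p (-1) = 0" and "0 \<le> k"
  shows "\<exists>B. \<forall>x::real. \<bar>x\<bar> < 1 \<longrightarrow> \<bar>(1 - x\<^sup>2) powr k * poly p x / (1 - x\<^sup>2)\<bar> \<le> B"
proof -
  obtain q where q: "p = rodrigues_base * q"
    using rodrigues_base_dvd[OF assms(1,2)] by blast
  obtain B where B: "\<And>x. \<bar>x\<bar> \<le> 1 \<Longrightarrow> \<bar>poly q x\<bar> \<le> B"
    using poly_bounded_on_unit_interval[of q] by blast
  have "\<bar>(1 - x\<^sup>2) powr k * poly p x / (1 - x\<^sup>2)\<bar> \<le> B" if x: "\<bar>x\<bar> < 1" for x :: real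
  proof -
    have pos: "0 < 1 - x\<^sup>2"
      using x by (simp add: abs_square_less_1)
    have "(1 - x\<^sup>2) powr k * poly p x / (1 - x\<^sup>2) = - ((1 - x\<^sup>2) powr k * poly q x)"
      using pos by (simp add: q field_simps power2_eq_square)
    also have "\<bar>\<dots>\<bar> \<le> 1 * B"
      unfolding abs_minus_cancel abs_mult
      by (intro mult_mono) (use pos B x assms(3) in \<open>auto intro: powr_le1\<close>)
    finally show ?thesis by simp
  qed
  then show ?thesis by blast
qed

lemma powr_poly_quotient_bounded:
  assumes "1 \<le> k"
  shows "\<exists>B. \<forall>x::real. \<bar>x\<bar> < 1 \<longrightarrow> \<bar>(1 - x\<^sup>2) powr k * poly p x / (1 - x\<^sup>2)\<bar> \<le> B"
proof -
  obtain B where B: "\<And>x. \<bar>x\<bar> \<le> 1 \<Longrightarrow> \<bar>poly p x\<bar> \<le> B"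
    using poly_bounded_on_unit_interval[of p] by blast
  have "\<bar>(1 - x\<^sup>2) powr k * poly p x / (1 - x\<^sup>2)\<bar> \<le> B" if x: "\<bar>x\<bar> < 1" for x :: real
  proof -
    have pos: "0 < 1 - x\<^sup>2"
      using x by (simp add: abs_square_less_1)
    have "(1 - x\<^sup>2) powr k * poly p x / (1 - x\<^sup>2) = (1 - x\<^sup>2) powr (k - 1) * poly p x"
      using pos by (simp add: powr_diff)
    also have "\<bar>\<dots>\<bar> \<le> 1 * B"
      unfolding abs_mult by (intro mult_mono) (use pos B x assms in \<open>auto intro: powr_le1\<close>)
    finally show ?thesis by simp
  qed
  then show ?thesis by blast
qed

text \<open>The \<open>1 / sin\<^sup>2\<theta>\<close> singularity at the poles is cancelled by the roots of the numerator at \<open>\<plusminus>1\<close>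
  when \<open>|m| \<le> 1\<close>, and by the factor \<open>sin\<^bsup>|m|\<^esup>\<theta>\<close> otherwise.\<close>

lemma spin2_radial_bounded:
  assumes "2 \<le> l"
  shows "\<exists>B. \<forall>x::real. \<bar>x\<bar> < 1 \<longrightarrow>
    \<bar>(1 - x\<^sup>2) powr (of_int \<bar>m\<bar> / 2) * poly (spin2_numerator l m) x / (1 - x\<^sup>2)\<bar> \<le> B"
proof (cases "\<bar>m\<bar> \<le> 1")
  case True
  then show ?thesis
    using spin2_numerator_roots[OF assms True] by (intro powr_poly_quotient_bounded_if_roots) auto
next
  case False
  then show ?thesis
    by (intro powr_poly_quotient_bounded) linarith
qed

lemma y2lm_bounded:
  assumes l: "2 \<le> l" and m: "\<bar>m\<bar> \<le> int l"
  shows "\<exists>B. \<forall>\<theta> \<phi>. cmod (y2lm l m \<theta> \<phi>) \<le> B"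
proof -
  obtain B where B: "\<And>x::real. \<bar>x\<bar> < 1 \<Longrightarrow>
      \<bar>(1 - x\<^sup>2) powr (of_int \<bar>m\<bar> / 2) * poly (spin2_numerator l m) x / (1 - x\<^sup>2)\<bar> \<le> B"
    using spin2_radial_bounded[OF l, of m] by blast
  define c where "c = sqrt (fact (l - 2) / fact (l + 2) :: real)"
  have "cmod (y2lm l m \<theta> \<phi>) \<le> \<bar>c\<bar> * \<bar>B\<bar>" for \<theta> \<phi>
  proof (cases "sin \<theta> = 0")
    case True
    then show ?thesis
      by (simp add: y2lm_eq_radial alpha_s2_def beta_s2_def cot_def)
  next
    case False
    have "cmod (y2lm l m \<theta> \<phi>) = \<bar>c\<bar> *
        \<bar>(1 - (cos \<theta>)\<^sup>2) powr (of_int \<bar>m\<bar> / 2) * poly (spin2_numerator l m) (cos \<theta>) / (1 - (cos \<theta>)\<^sup>2)\<bar>"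
      unfolding y2lm_eq_radial alpha_s2_eq_alpha_numerator beta_s2_eq_beta_factor
        radial_eq_spin2_numerator[OF l m abs_cos_less_1[OF False]]
      by (simp only: norm_mult norm_of_real norm_cis mult_1_right abs_mult c_def)
    also have "\<dots> \<le> \<bar>c\<bar> * \<bar>B\<bar>"
      using B[OF abs_cos_less_1[OF False]] by (intro mult_left_mono) auto
    finally show ?thesis .
  qed
  then show ?thesis by blast
qed

lemma ylm_bounded:
  assumes "0 \<le> m"
  shows "\<exists>B. \<forall>\<theta> \<phi>. cmod (ylm l m \<theta> \<phi>) \<le> B"
proof -
  define p :: "real poly" where "p = (pderiv ^^ nat (int l + m)) (rodrigues_base ^ l)"
  obtain B where B: "\<And>x::real. \<bar>x\<bar> \<le> 1 \<Longrightarrow> \<bar>poly p x\<bar> \<le> B"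
    using poly_bounded_on_unit_interval[of p] by blast
  have "cmod (ylm l m \<theta> \<phi>) \<le> \<bar>ylm_norm l m\<bar> * (1 / (2 ^ l * fact l) * 1 * \<bar>B\<bar>)" for \<theta> \<phi>
  proof -
    define x where "x = cos \<theta>"
    have x: "\<bar>x\<bar> \<le> 1"
      by (simp add: x_def)
    then have "\<bar>(1 - x\<^sup>2) powr (of_int m / 2)\<bar> \<le> 1"
      using assms by (simp add: powr_le1 abs_square_le_1)
    then have "\<bar>alegendre l m x\<bar> \<le> 1 / (2 ^ l * fact l) * 1 * \<bar>B\<bar>"
      unfolding alegendre_def p_def[symmetric] abs_mult using B[OF x]
      by (intro mult_mono) auto
    then have "\<bar>ylm_norm l m\<bar> * \<bar>alegendre l m x\<bar> \<le> \<bar>ylm_norm l m\<bar> * (1 / (2 ^ l * fact l) * 1 * \<bar>B\<bar>)"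
      by (rule mult_left_mono) simp
    then show ?thesis
      unfolding ylm_eq_ylm_norm norm_mult norm_of_real norm_cis x_def[symmetric] abs_mult by simp
  qed
  then show ?thesis by blast
qed

lemma yreal_bounded: "\<exists>B. \<forall>\<theta> \<phi>. \<bar>yreal l m \<theta> \<phi>\<bar> \<le> B"
proof -
  obtain B where B: "\<And>\<theta> \<phi>. cmod (ylm l \<bar>m\<bar> \<theta> \<phi>) \<le> B"
    using ylm_bounded[of "\<bar>m\<bar>" l] by auto
  have "\<bar>yreal l m \<theta> \<phi>\<bar> \<le> sqrt 2 * B" for \<theta> \<phi>
  proof -
    have "cmod (ylm l \<bar>m\<bar> \<theta> \<phi>) \<le> sqrt 2 * cmod (ylm l \<bar>m\<bar> \<theta> \<phi>)"
      using mult_right_mono[of 1 "sqrt 2" "cmod (ylm l \<bar>m\<bar> \<theta> \<phi>)"] by simp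
    then have "\<bar>yreal l m \<theta> \<phi>\<bar> \<le> sqrt 2 * cmod (ylm l \<bar>m\<bar> \<theta> \<phi>)"
      using abs_Re_le_cmod[of "ylm l \<bar>m\<bar> \<theta> \<phi>"] abs_Im_le_cmod[of "ylm l \<bar>m\<bar> \<theta> \<phi>"]
      by (auto simp: yreal_def abs_mult)
    then show ?thesis
      using B[of \<theta> \<phi>] by (meson mult_left_mono order.trans real_sqrt_ge_zero zero_le_numeral)
  qed
  then show ?thesis by blast
qed

lemma norm_stokes_le: "norm (stokes a b c d) \<le> \<bar>a\<bar> + \<bar>b\<bar> + \<bar>c\<bar> + \<bar>d\<bar>"
  by (rule order.trans[OF norm_le_l1_cart]) (simp add: sum_4 stokes_def)

lemma bounded_measurable_field_psh:
  assumes "psh_index l m q"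
  shows "bounded_measurable_field (psh l m q)"
proof -
  obtain By where By: "\<And>\<theta> \<phi>. \<bar>yreal l m \<theta> \<phi>\<bar> \<le> By"
    using yreal_bounded by blast
  have "\<exists>B. \<forall>\<theta> \<phi>. norm (psh l m q \<theta> \<phi>) \<le> B"
  proof (cases "q = 1 \<or> q = 2")
    case True
    then have "2 \<le> l" "\<bar>m\<bar> \<le> int l"
      using assms by (auto simp: psh_index_def)
    then obtain B where B: "\<And>\<theta> \<phi>. cmod (y2lm l m \<theta> \<phi>) \<le> B"
      using y2lm_bounded by blast
    have "norm (psh l m q \<theta> \<phi>) \<le> B + B" for \<theta> \<phi>
      using True norm_stokes_le[of 0 "Re (y2lm l m \<theta> \<phi>)" "Im (y2lm l m \<theta> \<phi>)" 0]
        norm_stokes_le[of 0 "- Im (y2lm l m \<theta> \<phi>)" "Re (y2lm l m \<theta> \<phi>)" 0]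
        abs_Re_le_cmod[of "y2lm l m \<theta> \<phi>"] abs_Im_le_cmod[of "y2lm l m \<theta> \<phi>"] B[of \<theta> \<phi>]
      by (auto simp: psh_def)
    then show ?thesis by blast
  next
    case False
    have "norm (psh l m q \<theta> \<phi>) \<le> By" for \<theta> \<phi>
      using False norm_stokes_le[of "yreal l m \<theta> \<phi>" 0 0 0] norm_stokes_le[of 0 0 0 "yreal l m \<theta> \<phi>"]
        By[of \<theta> \<phi>]
      by (auto simp: psh_def)
    then show ?thesis by blast
  qed
  then show ?thesis
    unfolding bounded_measurable_field_def using borel_measurable_psh by blast
qed

lemma psh_azimuth_shift:
  "psh l m 1 \<theta> (\<phi> + g) = cos (of_int m * g) *\<^sub>R psh l m 1 \<theta> \<phi> + sin (of_int m * g) *\<^sub>R psh l m 2 \<theta> \<phi>"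
  "psh l m 2 \<theta> (\<phi> + g) = (- sin (of_int m * g)) *\<^sub>R psh l m 1 \<theta> \<phi> + cos (of_int m * g) *\<^sub>R psh l m 2 \<theta> \<phi>"
  by (simp_all add: psh_def y2lm_azimuth_shift cis.ctr stokes_def vec_eq_iff algebra_simps)

lemma yreal_azimuth_shift:
  "yreal l m \<theta> (\<phi> + g) = cos (of_int (- m) * g) * yreal l m \<theta> \<phi> + sin (of_int (- m) * g) * yreal l (- m) \<theta> \<phi>"
  "yreal l (- m) \<theta> (\<phi> + g) = (- sin (of_int (- m) * g)) * yreal l m \<theta> \<phi> + cos (of_int (- m) * g) * yreal l (- m) \<theta> \<phi>"
  by (cases "m > 0"; cases "m = 0"; simp add: yreal_def ylm_azimuth_shift cis.ctr algebra_simps)+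

lemma azimuthal_pair_psh_spin2:
  assumes "2 \<le> l" and "\<bar>m\<bar> \<le> int l"
  shows "azimuthal_pair (psh l m 1) (psh l m 2) m"
    and "azimuthal_pair (psh l m 2) (\<lambda>\<theta> \<phi>. - psh l m 1 \<theta> \<phi>) m"
proof -
  have bounded: "bounded_measurable_field (psh l m 1)" "bounded_measurable_field (psh l m 2)"
    using assms by (auto intro!: bounded_measurable_field_psh simp: psh_index_def)
  then show "azimuthal_pair (psh l m 1) (psh l m 2) m"
    unfolding azimuthal_pair_def using psh_azimuth_shift by blast
  have "bounded_measurable_field (\<lambda>\<theta> \<phi>. - psh l m 1 \<theta> \<phi>)"
    using bounded(1) by (simp add: bounded_measurable_field_def)
  moreover have "psh l m 2 \<theta> (\<phi> + g)
      = cos (of_int m * g) *\<^sub>R psh l m 2 \<theta> \<phi> + sin (of_int m * g) *\<^sub>R - psh l m 1 \<theta> \<phi>"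
    and "- psh l m 1 \<theta> (\<phi> + g)
      = (- sin (of_int m * g)) *\<^sub>R psh l m 2 \<theta> \<phi> + cos (of_int m * g) *\<^sub>R - psh l m 1 \<theta> \<phi>" for \<theta> \<phi> g
    unfolding psh_azimuth_shift by (simp_all add: algebra_simps)
  ultimately show "azimuthal_pair (psh l m 2) (\<lambda>\<theta> \<phi>. - psh l m 1 \<theta> \<phi>) m"
    using bounded(2) by (simp add: azimuthal_pair_def)
qed

lemma azimuthal_pair_psh_scalar:
  assumes "psh_index l m q" and "q \<noteq> 1" and "q \<noteq> 2"
  shows "azimuthal_pair (psh l m q) (psh l (- m) q) (- m)"
proof -
  define c where "c = (if q = 0 then stokes 1 0 0 0 else stokes 0 0 0 1)"
  have c: "psh l m q \<theta> \<phi> = yreal l m \<theta> \<phi> *\<^sub>R c" for l m \<theta> \<phi>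
    using assms(2,3) by (simp add: psh_def stokes_def vec_eq_iff c_def)
  have "bounded_measurable_field (psh l m q)" "bounded_measurable_field (psh l (- m) q)"
    using assms by (auto intro!: bounded_measurable_field_psh simp: psh_index_def)
  then show ?thesis
    by (simp add: azimuthal_pair_def c yreal_azimuth_shift scaleR_add_left scaleR_diff_left)
qed

lemma psh_azimuthal_pair:
  assumes "psh_index l m q"
  obtains e' n where "azimuthal_pair (psh l m q) e' n" and "\<bar>n\<bar> = \<bar>m\<bar>"
proof -
  have spin2: "2 \<le> l" "\<bar>m\<bar> \<le> int l" if "q = 1 \<or> q = 2"
    using assms that by (auto simp: psh_index_def)
  consider "q = 1" | "q = 2" | "q \<noteq> 1" "q \<noteq> 2"
    by blast
  then show ?thesis
    by cases (use that spin2 azimuthal_pair_psh_spin2 azimuthal_pair_psh_scalar[OF assms] in fastforce)+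
qed

lemma psh_coeff_eq_0:
  assumes P: "integrable_field P" "isotropic P"
    and out: "psh_index lo mo po" and inc: "psh_index li mi pin" and "\<bar>mi\<bar> \<noteq> \<bar>mo\<bar>"
  shows "psh_coeff P lo mo po li mi pin = 0"
proof -
  obtain eo' no where pair_out: "azimuthal_pair (psh lo mo po) eo' no" and "\<bar>no\<bar> = \<bar>mo\<bar>"
    using psh_azimuthal_pair[OF out] by blast
  obtain ei' ni where pair_in: "azimuthal_pair (psh li mi pin) ei' ni" and "\<bar>ni\<bar> = \<bar>mi\<bar>"
    using psh_azimuthal_pair[OF inc] by blast
  have "psh_coeff P lo mo po li mi pin = mueller_form P (psh lo mo po) (psh li mi pin)"
    unfolding psh_coeff_def
    by (rule sphere_int_inner_eq_mueller_form[OF P(1) bounded_measurable_field_psh[OF out]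
          bounded_measurable_field_psh[OF inc]])
  also have "\<dots> = 0"
    using mueller_form_azimuthal_pairs_eq_0[OF P pair_out pair_in]
      \<open>\<bar>no\<bar> = \<bar>mo\<bar>\<close> \<open>\<bar>ni\<bar> = \<bar>mi\<bar>\<close> \<open>\<bar>mi\<bar> \<noteq> \<bar>mo\<bar>\<close> by simp
  finally show ?thesis .
qed

theorem mainTheorem4:
  fixes P :: mueller_field
  assumes "is_mueller_field P"
    and "isotropic P"
    and "integrable_field P"
  shows "(\<forall>lo mo po li mi pin. psh_index lo mo po \<and> psh_index li mi pin \<and> \<bar>mi\<bar> \<noteq> \<bar>mo\<bar>
            \<longrightarrow> psh_coeff P lo mo po li mi pin = 0)
       \<and> (\<forall>lo mo li mi. 2 \<le> li \<and> 2 \<le> lo \<and> \<bar>mo\<bar> \<le> int lo \<and> \<bar>mi\<bar> \<le> int li \<and> mi \<noteq> mo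
            \<longrightarrow> tilde_iso P lo mo li mi = 0)
       \<and> (\<forall>lo mo li mi. 2 \<le> li \<and> 2 \<le> lo \<and> \<bar>mo\<bar> \<le> int lo \<and> \<bar>mi\<bar> \<le> int li \<and> mi \<noteq> - mo
            \<longrightarrow> tilde_conj P lo mo li mi = 0)"
  \<comment> \<open>All Mueller matrices enter in \<open>\<theta>\<phi>\<close>-frames.\<close>
  using psh_coeff_eq_0[OF assms(3,2)] tilde_iso_eq_0[OF assms(2)] tilde_conj_eq_0[OF assms(2)]
  by blast

end
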